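(* Let $x_0\in\mathbb{T}^d$, integers $a<0<b$, $\epsilon\in(0,1)$, and assume $$|V(x_0+n\omega)-V(x_0)|\ge\exp(-(\log\lambda)^\epsilon)\quad\text{for all }n\in[a,b]\setminus\{0\}.$$ There exists $\lambda_0(V)=\exp((T_V)^C)$, $C=C(\rho,\epsilon)$, such that for $\lambda\ge\lambda_0$ the following holds. There exist an index $k$ and a choice of $\ell^2$-normalized eigenvectors $\psi_k^{[a,b]}(x,\cdot)$ of $H_{[a,b]}(x)$ with eigenvalue $E_k^{[a,b]}(x)$ such that for every $x\in\mathbb{T}^d$ with $|x-x_0|<\exp(-3(\log\lambda)^\epsilon)$: (1) $|\lambda^{-1}E_k^{[a,b]}(x)-V(x)|\le2\lambda^{-1}$; (2) $|\psi_k^{[a,b]}(x,n)|<\exp(-(\log\lambda)|n|/2)$ for $n\ne0$; (3) $|\psi_k^{[a,b]}(x,0)-1|<\exp(-(\log\lambda)/2)$; (4) $\lambda^{-1}|E_j^{[a,b]}(x)-E_k^{[a,b]}(x)|\ge\frac18\exp(-(\log\lambda)^\epsilon)$ for all $j\ne k$. Furthermore, if in addition $V(x_0+n\omega)-V(x_0)\ge\exp(-(\log\lambda)^\epsilon)$ for all $n\in[a,b]\setminus\{0\}$, then also (4') $\lambda^{-1}(E_j^{[a,b]}(x)-E_k^{[a,b]}(x))\ge\frac18\exp(-(\log\lambda)^\epsilon)$ for all $j\ne k$.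
   Context: $\mathbb{T}=\mathbb{R}/\mathbb{Z}$, $d\ge2$; $|\cdot|$ is the sup-norm (distance on $\mathbb{T}^d$). $\omega\in\mathbb{T}^d$ is a fixed frequency vector. $V$ is a non-constant real-analytic function on $\mathbb{T}^d$ extending analytically to $\mathbb{T}^d_\rho=\{x+iy:|y|<\rho\}$, $0<\rho\le1$; $\|V\|_\infty=\sup_{\mathbb{T}^d_{3\rho/4}}|V|$; $\underline{\iota}=\inf_{x\in\mathbb{T}^d}\sup\{|V(x')-V(x)|:|x'-x|\le\rho/100\}$; $T_V=2+\max(0,\log\|V\|_\infty)+\max(0,\log\underline{\iota}^{-1})$. For $\lambda>0$, $H_{[a,b]}(x)$ is the restriction to $[a,b]$, with Dirichlet boundary conditions, of $[H(x)\psi](n)=-\psi(n+1)-\psi(n-1)+\lambda V(x+n\omega)\psi(n)$; $E_j^{[a,b]}(x)$ are its eigenvalues. *)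

theory Defs
  imports "HOL-Analysis.Analysis"
begin

text \<open>Points of the torus are represented by vectors in real^'d; functions on the torus
  are 1-periodic functions on real^'d.\<close>

definition torus_dist :: "real^'d \<Rightarrow> real^'d \<Rightarrow> real" where
  "torus_dist x y = Max (range (\<lambda>i. \<bar>(x$i - y$i) - of_int (round (x$i - y$i))\<bar>))"

definition torus_periodic :: "(real^'d \<Rightarrow> real) \<Rightarrow> bool" where
  "torus_periodic V \<longleftrightarrow> (\<forall>x i. V (x + axis i 1) = V x)"

text \<open>Holomorphy in several complex variables: complex-linear Frechet derivative.\<close>
definition holo_on :: "(complex^'d) set \<Rightarrow> (complex^'d \<Rightarrow> complex) \<Rightarrow> bool" where
  "holo_on S f \<longleftrightarrow> (\<forall>z\<in>S. \<exists>L. (f has_derivative L) (at z) \<and>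
       (\<forall>w. L (\<chi> i. \<i> * w$i) = \<i> * L w))"

definition strip :: "real \<Rightarrow> (complex^'d) set" where
  "strip r = {z. \<forall>i. \<bar>Im (z$i)\<bar> < r}"

definition analytic_ext :: "real \<Rightarrow> (real^'d \<Rightarrow> real) \<Rightarrow> (complex^'d \<Rightarrow> complex) \<Rightarrow> bool" where
  "analytic_ext r V Vc \<longleftrightarrow> holo_on (strip r) Vc \<and>
     (\<forall>x. Vc (\<chi> i. complex_of_real (x$i)) = complex_of_real (V x))"

definition sup_norm_strip :: "real \<Rightarrow> (complex^'d \<Rightarrow> complex) \<Rightarrow> real" where
  "sup_norm_strip r Vc = Sup ((\<lambda>z. cmod (Vc z)) ` strip (3 * r / 4))"

definition iota_low :: "real \<Rightarrow> (real^'d \<Rightarrow> real) \<Rightarrow> real" where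
  "iota_low r V = Inf (range (\<lambda>x. Sup {\<bar>V x' - V x\<bar> | x'. torus_dist x' x \<le> r / 100}))"

definition T_V :: "real \<Rightarrow> (real^'d \<Rightarrow> real) \<Rightarrow> (complex^'d \<Rightarrow> complex) \<Rightarrow> real" where
  "T_V r V Vc = 2 + max 0 (ln (sup_norm_strip r Vc)) + max 0 (ln (inverse (iota_low r V)))"

text \<open>psi is an eigenvector (supported on [a,b], i.e. Dirichlet b.c.) of H_[a,b](x)
  with eigenvalue E, where (H psi)(n) = -psi(n+1) - psi(n-1) + lam V(x + n omega) psi(n).\<close>
definition dir_eigvec :: "real \<Rightarrow> (real^'d \<Rightarrow> real) \<Rightarrow> real^'d \<Rightarrow> real^'d \<Rightarrow> int \<Rightarrow> int
    \<Rightarrow> real \<Rightarrow> (int \<Rightarrow> real) \<Rightarrow> bool" where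
  "dir_eigvec lam V \<omega> x a b E \<psi> \<longleftrightarrow>
     (\<forall>n. n \<notin> {a..b} \<longrightarrow> \<psi> n = 0) \<and> (\<exists>n. \<psi> n \<noteq> 0) \<and>
     (\<forall>n\<in>{a..b}. - \<psi> (n + 1) - \<psi> (n - 1) + lam * V (x + of_int n *\<^sub>R \<omega>) * \<psi> n = E * \<psi> n)"

definition dir_eigs :: "real \<Rightarrow> (real^'d \<Rightarrow> real) \<Rightarrow> real^'d \<Rightarrow> real^'d \<Rightarrow> int \<Rightarrow> int \<Rightarrow> real set" where
  "dir_eigs lam V \<omega> x a b = {E. \<exists>\<psi>. dir_eigvec lam V \<omega> x a b E \<psi>}"

text \<open>E_j^{[a,b]}(x), j = 0..b-a, in increasing order (the eigenvalues are simple).\<close>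
definition dir_E :: "real \<Rightarrow> (real^'d \<Rightarrow> real) \<Rightarrow> real^'d \<Rightarrow> real^'d \<Rightarrow> int \<Rightarrow> int \<Rightarrow> nat \<Rightarrow> real" where
  "dir_E lam V \<omega> x a b j = sorted_list_of_set (dir_eigs lam V \<omega> x a b) ! j"

end

(*
  The Dirichlet restriction of H to [a, b] is the Jacobi matrix with diagonal
  d n = \<lambda> V (x + n \<omega>) and off-diagonal entries -1. Its leading principal minors satisfy a
  three-term recursion and form a Sturm sequence, so the number of eigenvalues below E is a number
  of sign changes; when E is at distance at least 2 from every d n, this number is just
  #{n. d n < E}.

  Cauchy's estimate for the analytic extension makes V Lipschitz on the torus, so the
  non-resonance hypothesis at x0 persists at every x close to x0: d 0 stays separated by
  3 \<lambda> g / 4 from all other diagonal entries, where g = exp (- (log \<lambda>)^\<epsilon>). Comparing the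
  counts at d 0 \<plusminus> \<lambda> g / 4 then shows that exactly one eigenvalue lies in this window, with
  the index k = #{n. V (x0 + n \<omega>) < V x0}, independent of x; all other eigenvalues are
  \<lambda> g / 8 away from it. Away from the origin the eigenvalue equation gives
  |\<psi> n| \<le> 2 / (\<lambda> g) (|\<psi> (n + 1)| + |\<psi> (n - 1)|), so \<psi> has little mass off the origin and,
  by a maximum principle, decays like \<lambda>^(-|n|/2).
*)

theory Submission
  imports Defs "HOL-Complex_Analysis.Complex_Analysis" "HOL-Computational_Algebra.Polynomial"
begin

section \<open>Sturm sequences of Jacobi matrices\<close>

text \<open>\<open>jacobi_poly e (Suc m)\<close> is the characteristic polynomial \<open>det (D - J - E)\<close> of the
  leading \<open>m \<times> m\<close> block of the Jacobi matrix with diagonal \<open>e\<close> and off-diagonal entries \<open>-1\<close>;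
  the recursion is the expansion of this determinant along its last row.\<close>

fun jacobi_poly :: "(nat \<Rightarrow> real) \<Rightarrow> nat \<Rightarrow> real poly" where
  "jacobi_poly e 0 = 0"
| "jacobi_poly e (Suc 0) = 1"
| "jacobi_poly e (Suc (Suc i)) = [:e i, -1:] * jacobi_poly e (Suc i) - jacobi_poly e i"

lemma poly_jacobi_poly_Suc_Suc:
  "poly (jacobi_poly e (Suc (Suc i))) E =
    (e i - E) * poly (jacobi_poly e (Suc i)) E - poly (jacobi_poly e i) E"
  by (simp add: algebra_simps)

declare jacobi_poly.simps(3) [simp del]

lemma poly_jacobi_poly_2: "poly (jacobi_poly e 2) E = e 0 - E"
  using poly_jacobi_poly_Suc_Suc[of e 0 E] by (simp add: numeral_2_eq_2)

lemma degree_coeff_linear_mult_diff: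
  fixes p q :: "real poly"
  assumes "degree p \<le> Suc i" "degree q \<le> i"
  shows "degree ([:a, -1:] * p - q) \<le> Suc (Suc i) \<and>
    coeff ([:a, -1:] * p - q) (Suc (Suc i)) = - coeff p (Suc i)"
proof -
  have eq: "[:a, -1:] * p - q = smult a p + pCons 0 (smult (-1) p) - q" by simp
  have "degree (smult a p + pCons 0 (smult (-1) p) - q) \<le> Suc (Suc i)"
    using assms
    by (intro degree_diff_le degree_add_le)
      (auto intro: le_trans[OF degree_smult_le] simp: degree_pCons_eq_if)
  moreover have "coeff (smult a p + pCons 0 (smult (-1) p) - q) (Suc (Suc i)) = - coeff p (Suc i)"
    using assms by (simp add: coeff_eq_0)
  ultimately show ?thesis unfolding eq by simp
qed

lemma jacobi_poly_degree_coeff: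
  "degree (jacobi_poly e (Suc i)) \<le> i \<and> coeff (jacobi_poly e (Suc i)) i = (-1) ^ i"
proof -
  have "(degree (jacobi_poly e (Suc i)) \<le> i \<and> coeff (jacobi_poly e (Suc i)) i = (-1) ^ i) \<and>
    (degree (jacobi_poly e (Suc (Suc i))) \<le> Suc i \<and>
     coeff (jacobi_poly e (Suc (Suc i))) (Suc i) = (-1) ^ Suc i)"
  proof (induction i)
    case 0
    then show ?case by (simp add: jacobi_poly.simps(3))
  next
    case (Suc i)
    then show ?case
      using degree_coeff_linear_mult_diff[of "jacobi_poly e (Suc (Suc i))" i
          "jacobi_poly e (Suc i)" "e (Suc i)"]
      by (simp add: jacobi_poly.simps(3)[of e "Suc i"])
  qed
  then show ?thesis by blast
qed

lemma jacobi_poly_nonzero: "jacobi_poly e (Suc i) \<noteq> 0"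
  using jacobi_poly_degree_coeff[of e i] by auto

definition jacobi_roots :: "(nat \<Rightarrow> real) \<Rightarrow> nat \<Rightarrow> real set" where
  "jacobi_roots e m = {r. poly (jacobi_poly e (Suc m)) r = 0}"

definition jacobi_count :: "(nat \<Rightarrow> real) \<Rightarrow> nat \<Rightarrow> real \<Rightarrow> nat" where
  "jacobi_count e m E = card {r \<in> jacobi_roots e m. r < E}"

lemma finite_jacobi_roots: "finite (jacobi_roots e m)"
  unfolding jacobi_roots_def using poly_roots_finite[OF jacobi_poly_nonzero] .

lemma card_jacobi_roots_le: "card (jacobi_roots e m) \<le> m"
  unfolding jacobi_roots_def
  using card_poly_roots_bound[OF jacobi_poly_nonzero, of e m] jacobi_poly_degree_coeff[of e m]
  by linarith

lemma jacobi_poly_no_common_root: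
  assumes "poly (jacobi_poly e (Suc i)) E = 0"
  shows "poly (jacobi_poly e (Suc (Suc i))) E \<noteq> 0"
  using assms
proof (induction i)
  case (Suc i)
  then show ?case using poly_jacobi_poly_Suc_Suc[of e "Suc i" E] by auto
qed simp

lemma dominant_recursion_step:
  fixes c x y :: real
  assumes "2 \<le> \<bar>c\<bar>" "\<bar>x\<bar> \<le> \<bar>y\<bar>" "y \<noteq> 0"
  shows "\<bar>y\<bar> \<le> \<bar>c * y - x\<bar>" "c * y - x \<noteq> 0" "(c * y - x) * y < 0 \<longleftrightarrow> c < 0"
proof -
  have "2 * \<bar>y\<bar> \<le> \<bar>c * y\<bar>" using assms by (simp add: abs_mult mult_right_mono)
  then show "\<bar>y\<bar> \<le> \<bar>c * y - x\<bar>" using assms by linarith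
  then show "c * y - x \<noteq> 0" using assms by auto
  have "\<bar>x\<bar> * \<bar>y\<bar> \<le> \<bar>y\<bar> * \<bar>y\<bar>" using assms by (intro mult_right_mono) auto
  then have xy: "\<bar>x * y\<bar> \<le> y * y" by (simp add: abs_mult)
  have yy: "y * y > 0" using assms(3)
    by (simp add: zero_less_mult_iff linorder_neq_iff disj_commute)
  have "(c * y - x) * y = c * (y * y) - x * y" by (simp add: algebra_simps)
  moreover have "c < 0 \<Longrightarrow> c * (y * y) \<le> -2 * (y * y)" using assms yy by (intro mult_right_mono) auto
  moreover have "\<not> c < 0 \<Longrightarrow> 2 * (y * y) \<le> c * (y * y)" using assms yy by (simp add: mult_right_mono)
  ultimately show "(c * y - x) * y < 0 \<longleftrightarrow> c < 0" using xy yy by (smt (verit))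
qed

lemma jacobi_poly_dominant:
  assumes "\<forall>j<m. 2 \<le> \<bar>e j - E\<bar>" "i \<le> m"
  shows "\<bar>poly (jacobi_poly e i) E\<bar> \<le> \<bar>poly (jacobi_poly e (Suc i)) E\<bar> \<and>
    poly (jacobi_poly e (Suc i)) E \<noteq> 0"
  using assms(2)
proof (induction i)
  case (Suc i)
  then have "2 \<le> \<bar>e i - E\<bar>" using assms(1) by auto
  then show ?case
    using dominant_recursion_step[of "e i - E" "poly (jacobi_poly e i) E"
        "poly (jacobi_poly e (Suc i)) E"]
      Suc poly_jacobi_poly_Suc_Suc[of e i E]
    by auto
qed simp

lemma jacobi_poly_dominant_sign_change:
  assumes "\<forall>j<m. 2 \<le> \<bar>e j - E\<bar>" "j < m"
  shows "poly (jacobi_poly e (Suc (Suc j))) E * poly (jacobi_poly e (Suc j)) E < 0 \<longleftrightarrow> e j < E"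
  using jacobi_poly_dominant[OF assms(1), of j] assms
    dominant_recursion_step(3)[of "e j - E" "poly (jacobi_poly e j) E"
      "poly (jacobi_poly e (Suc j)) E"]
    poly_jacobi_poly_Suc_Suc[of e j E]
  by auto

lemma jacobi_poly_pos_below:
  assumes "\<forall>j<m. 2 \<le> e j - E" "i \<le> m"
  shows "0 < poly (jacobi_poly e (Suc i)) E"
  using assms(2)
proof (induction i)
  case (Suc i)
  have dom: "\<forall>j<m. 2 \<le> \<bar>e j - E\<bar>" using assms(1) by force
  have "2 \<le> e i - E" using assms(1) Suc.prems by simp
  then have "\<not> poly (jacobi_poly e (Suc (Suc i))) E * poly (jacobi_poly e (Suc i)) E < 0"
    using jacobi_poly_dominant_sign_change[OF dom, of i] Suc.prems by simp
  moreover have "poly (jacobi_poly e (Suc (Suc i))) E \<noteq> 0"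
    using jacobi_poly_dominant[OF dom Suc.prems] by simp
  moreover have "0 < poly (jacobi_poly e (Suc i)) E" using Suc by simp
  ultimately show ?case by (meson linorder_neqE_linordered_idom mult_neg_pos)
qed simp

lemma jacobi_poly_sign_above:
  assumes "\<forall>j<m. 2 \<le> E - e j" "i \<le> m"
  shows "poly (jacobi_poly e (Suc i)) E \<noteq> 0 \<and> (0 < poly (jacobi_poly e (Suc i)) E \<longleftrightarrow> even i)"
  using assms(2)
proof (induction i)
  case (Suc i)
  have dom: "\<forall>j<m. 2 \<le> \<bar>e j - E\<bar>" using assms(1) by force
  have "2 \<le> E - e i" using assms(1) Suc.prems by simp
  then have "poly (jacobi_poly e (Suc (Suc i))) E * poly (jacobi_poly e (Suc i)) E < 0"
    using jacobi_poly_dominant_sign_change[OF dom, of i] Suc.prems by simp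
  moreover have "poly (jacobi_poly e (Suc (Suc i))) E \<noteq> 0"
    using jacobi_poly_dominant[OF dom Suc.prems] by simp
  moreover have "poly (jacobi_poly e (Suc i)) E \<noteq> 0 \<and> (0 < poly (jacobi_poly e (Suc i)) E \<longleftrightarrow> even i)"
    using Suc by simp
  ultimately show ?case by (smt (verit) even_Suc mult_pos_pos mult_neg_neg)
qed simp

lemma nth_sorted_list_of_set_mem:
  fixes R :: "'a::linorder set"
  assumes "finite R" "i < card R"
  shows "sorted_list_of_set R ! i \<in> R"
  using assms nth_mem[of i "sorted_list_of_set R"] by simp

lemma sorted_list_of_set_nth_less:
  fixes R :: "'a::linorder set"
  assumes "finite R" "i < j" "j < card R"
  shows "sorted_list_of_set R ! i < sorted_list_of_set R ! j"
  using sorted_wrt_nth_less[OF strict_sorted_list_of_set, of i j R] assms by simp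

lemma card_image_filter:
  assumes "inj_on f A"
  shows "card {y \<in> f ` A. P y} = card {x \<in> A. P (f x)}"
proof -
  have "{y \<in> f ` A. P y} = f ` {x \<in> A. P (f x)}" by auto
  then show ?thesis using assms by (simp add: card_image inj_on_subset)
qed

lemma card_less_nth_sorted_list_of_set:
  fixes R :: "'a::linorder set"
  assumes "finite R" "i < card R"
  shows "card {s \<in> R. s < sorted_list_of_set R ! i} = i"
proof -
  let ?ys = "sorted_list_of_set R"
  have R: "R = (\<lambda>j. ?ys ! j) ` {..<card R}"
    using assms(1) by (metis length_sorted_list_of_set list.set_map map_nth
      set_sorted_list_of_set set_upt
        atLeast_upt)
  have inj: "inj_on (\<lambda>j. ?ys ! j) {..<card R}"
    using distinct_sorted_list_of_set[of R] by (auto simp: inj_on_def nth_eq_iff_index_eq)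
  have "?ys ! j < ?ys ! i \<longleftrightarrow> j < i" if "j < card R" for j
    using sorted_list_of_set_nth_less[OF assms(1), of j i]
      sorted_list_of_set_nth_less[OF assms(1), of i j]
      that assms(2) by (metis less_asym linorder_neqE_nat)
  then have "{j \<in> {..<card R}. ?ys ! j < ?ys ! i} = {..<i}" using assms(2) by auto
  then show ?thesis by (subst R, subst card_image_filter[OF inj]) simp
qed

lemma nth_sorted_list_of_set_card_less:
  fixes R :: "'a::linorder set"
  assumes "finite R" "r \<in> R"
  shows "sorted_list_of_set R ! card {s \<in> R. s < r} = r" "card {s \<in> R. s < r} < card R"
proof -
  obtain i where i: "i < card R" "sorted_list_of_set R ! i = r"
    using assms by (metis in_set_conv_nth length_sorted_list_of_set set_sorted_list_of_set)
  then have "card {s \<in> R. s < r} = i" using card_less_nth_sorted_list_of_set[OF assms(1)] by blast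
  then show "sorted_list_of_set R ! card {s \<in> R. s < r} = r" "card {s \<in> R. s < r} < card R"
    using i by auto
qed

lemma downward_closed_eq_lessThan_card:
  fixes S :: "nat set"
  assumes "finite S" "\<And>i j. i \<in> S \<Longrightarrow> j \<le> i \<Longrightarrow> j \<in> S"
  shows "S = {..<card S}"
proof (cases "S = {}")
  case False
  have M: "Max S \<in> S" using assms False by simp
  have "S = {..Max S}"
    using assms(1) M assms(2)[OF M] by (auto intro: Max_ge)
  then show ?thesis by (metis card_atMost lessThan_Suc_atMost)
qed simp

lemma poly_pos_iff_no_root_between:
  fixes p :: "real poly"
  assumes "a \<le> b" "\<forall>x. a \<le> x \<and> x \<le> b \<longrightarrow> poly p x \<noteq> 0"
  shows "0 < poly p a \<longleftrightarrow> 0 < poly p b"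
proof (rule ccontr)
  assume "\<not> ?thesis"
  moreover have "poly p a \<noteq> 0" "poly p b \<noteq> 0" using assms by auto
  ultimately have "poly p a * poly p b < 0"
    by (metis linorder_neqE_linordered_idom mult_neg_pos mult_pos_neg)
  moreover have "a < b" using assms calculation
    by (metis less_eq_real_def mult_less_0_iff not_less_iff_gr_or_eq)
  ultimately obtain x where "a < x" "x < b" "poly p x = 0" using poly_IVT by blast
  then show False using assms by auto
qed

locale interlacing =
  fixes n :: nat and p z :: "nat \<Rightarrow> real"
  assumes p_less: "\<And>i j. i < j \<Longrightarrow> j \<le> Suc n \<Longrightarrow> p i < p j"
    and interlaced: "\<And>j. j \<le> n \<Longrightarrow> p j < z j \<and> z j < p (Suc j)"
begin

lemma p_le: "i \<le> j \<Longrightarrow> j \<le> Suc n \<Longrightarrow> p i \<le> p j"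
  using p_less[of i j] by (cases "i = j") auto

lemma z_less: "i < j \<Longrightarrow> j \<le> n \<Longrightarrow> z i < z j"
  using interlaced[of i] interlaced[of j] p_le[of "Suc i" j] by force

lemma z_less_iff: "i \<le> n \<Longrightarrow> j \<le> n \<Longrightarrow> z i < z j \<longleftrightarrow> i < j"
  using z_less[of i j] z_less[of j i] by (cases i j rule: linorder_cases) auto

lemma inj_on_z: "inj_on z {..n}"
  by (rule inj_onI) (metis atMost_iff z_less_iff less_irrefl linorder_neqE_nat)

lemma count_bounds:
  "card {i \<in> {1..n}. p i < E} \<le> card {j \<in> {..n}. z j < E}"
  "card {j \<in> {..n}. z j < E} \<le> card {i \<in> {1..n}. p i < E} + 1"
proof -
  let ?A = "{i \<in> {1..n}. p i < E}" and ?B = "{j \<in> {..n}. z j < E}"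
  have "(\<lambda>i. i - 1) ` ?A \<subseteq> ?B"
  proof
    fix j assume "j \<in> (\<lambda>i. i - 1) ` ?A"
    then obtain i where i: "i \<in> ?A" "j = i - 1" by blast
    then have "z j < p i" using interlaced[of j] by auto
    then show "j \<in> ?B" using i by auto
  qed
  moreover have "inj_on (\<lambda>i. i - 1) ?A" by (auto simp: inj_on_def)
  ultimately show "card ?A \<le> card ?B" by (intro card_inj_on_le) auto
  have "?B \<subseteq> insert 0 ?A"
  proof
    fix j assume j: "j \<in> ?B"
    then have "j \<noteq> 0 \<Longrightarrow> p j < E" using interlaced[of j] by auto
    then show "j \<in> insert 0 ?A" using j by auto
  qed
  then have "card ?B \<le> card (insert 0 ?A)" by (intro card_mono) auto
  also have "\<dots> \<le> card ?A + 1" by (simp add: card_insert_if)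
  finally show "card ?B \<le> card ?A + 1" .
qed

lemma count_at:
  assumes j: "j \<le> n"
  shows "card {i \<in> {1..n}. p i < z j} = j" "card {i \<in> {..n}. z i < z j} = j"
proof -
  have "p i < z j \<longleftrightarrow> i \<le> j" if "i \<le> n" for i
    using interlaced[OF j] p_le[of "Suc j" i] p_le[of i j] that j by force
  then have "{i \<in> {1..n}. p i < z j} = {1..j}" using j by auto
  then show "card {i \<in> {1..n}. p i < z j} = j" by simp
  have "{i \<in> {..n}. z i < z j} = {..<j}" using z_less_iff[OF _ j] j by auto
  then show "card {i \<in> {..n}. z i < z j} = j" by simp
qed

text \<open>Between \<open>E\<close> and the separating point \<open>p c\<close>, where \<open>c\<close> counts the roots below \<open>E\<close>,
  the polynomial has no root, so it has the sign it has at \<open>p c\<close>.\<close>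

lemma sign_by_count:
  fixes h :: "real poly"
  assumes sign: "\<And>j. j \<le> Suc n \<Longrightarrow> poly h (p j) \<noteq> 0 \<and> (0 < poly h (p j) \<longleftrightarrow> even j)"
    and roots: "{r. poly h r = 0} = z ` {..n}"
    and E: "poly h E \<noteq> 0"
  shows "0 < poly h E \<longleftrightarrow> even (card {j \<in> {..n}. z j < E})"
proof -
  define c where "c = card {j \<in> {..n}. z j < E}"
  have "{j \<in> {..n}. z j < E} = {..<c}" unfolding c_def
  proof (rule downward_closed_eq_lessThan_card)
    fix i j assume i: "i \<in> {j \<in> {..n}. z j < E}" and ji: "j \<le> i"
    then have "z j \<le> z i" using z_less[of j i] by (cases "j = i") auto
    then show "j \<in> {j \<in> {..n}. z j < E}" using i ji by auto
  qed simp
  then have below: "z j < E \<longleftrightarrow> j < c" if "j \<le> n" for j using that by blast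
  have c: "c \<le> Suc n" unfolding c_def
    by (metis (no_types, lifting) card_atMost card_mono finite_atMost mem_Collect_eq subsetI)
  have "poly h x \<noteq> 0" if x: "min E (p c) \<le> x" "x \<le> max E (p c)" for x
  proof
    assume root: "poly h x = 0"
    then obtain j where j: "j \<le> n" "x = z j" using roots by auto
    show False
    proof (cases "j < c")
      case True
      then have "z j < p c" using interlaced[OF j(1)] p_le[of "Suc j" c] c by force
      then show False using x j below[of j] True by auto
    next
      case False
      then have "p c < z j" using interlaced[OF j(1)] p_le[of c j] j by force
      then show False using x j below[of j] False E root
        by (auto simp: min_def max_def split: if_splits)
    qed
  qed
  then have "0 < poly h E \<longleftrightarrow> 0 < poly h (p c)"
    using poly_pos_iff_no_root_between[of "min E (p c)" "max E (p c)" h]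
    by (cases "E \<le> p c") (auto simp: min_def max_def)
  also have "\<dots> \<longleftrightarrow> even c" using sign c by simp
  finally show ?thesis unfolding c_def .
qed

end

lemma alternating_signs_interlaced_roots:
  fixes h :: "real poly" and p :: "nat \<Rightarrow> real"
  assumes mono: "\<And>i j. i < j \<Longrightarrow> j \<le> Suc n \<Longrightarrow> p i < p j"
    and sign: "\<And>j. j \<le> Suc n \<Longrightarrow> poly h (p j) \<noteq> 0 \<and> (0 < poly h (p j) \<longleftrightarrow> even j)"
    and card: "card {r. poly h r = 0} \<le> Suc n"
  obtains z where "interlacing n p z" "{r. poly h r = 0} = z ` {..n}"
proof -
  have "\<exists>z. p j < z \<and> z < p (Suc j) \<and> poly h z = 0" if j: "j \<le> n" for j
  proof -
    have "poly h (p j) \<noteq> 0 \<and> (0 < poly h (p j) \<longleftrightarrow> even j)"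
      "poly h (p (Suc j)) \<noteq> 0 \<and> (0 < poly h (p (Suc j)) \<longleftrightarrow> even (Suc j))"
      using sign j by simp_all
    then have "poly h (p j) * poly h (p (Suc j)) < 0"
      by (cases "even j") (auto simp: mult_pos_neg mult_neg_pos)
    moreover have "p j < p (Suc j)" using mono[of j "Suc j"] j by simp
    ultimately show ?thesis using poly_IVT by blast
  qed
  then obtain z where z: "\<And>j. j \<le> n \<Longrightarrow> p j < z j \<and> z j < p (Suc j)"
    and root: "\<And>j. j \<le> n \<Longrightarrow> poly h (z j) = 0"
    by metis
  interpret interlacing n p z using mono z by unfold_locales
  have "card (z ` {..n}) = Suc n" using inj_on_z by (simp add: card_image)
  moreover have "z ` {..n} \<subseteq> {r. poly h r = 0}" using root by auto
  moreover have "h \<noteq> 0" using sign[of 0] by auto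
  ultimately have "z ` {..n} = {r. poly h r = 0}"
    using card by (intro card_seteq poly_roots_finite) auto
  then show thesis using that[of z] interlacing_axioms by simp
qed

lemma jacobi_poly_sign_outside:
  assumes bnd: "\<forall>j. \<bar>e j\<bar> \<le> B"
  shows "E \<le> - B - 2 \<Longrightarrow> 0 < poly (jacobi_poly e (Suc i)) E"
    and "B + 2 \<le> E \<Longrightarrow>
      poly (jacobi_poly e (Suc i)) E \<noteq> 0 \<and> (0 < poly (jacobi_poly e (Suc i)) E \<longleftrightarrow> even i)"
proof -
  have e: "- B \<le> e j \<and> e j \<le> B" for j using bnd[rule_format, of j] by (simp add: abs_le_iff)
  show "0 < poly (jacobi_poly e (Suc i)) E" if "E \<le> - B - 2"
  proof (rule jacobi_poly_pos_below)
    show "\<forall>j<i. 2 \<le> e j - E" using e that by (smt (verit))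
  qed simp
  show "poly (jacobi_poly e (Suc i)) E \<noteq> 0 \<and> (0 < poly (jacobi_poly e (Suc i)) E \<longleftrightarrow> even i)"
    if "B + 2 \<le> E"
  proof (rule jacobi_poly_sign_above)
    show "\<forall>j<i. 2 \<le> E - e j" using e that by (smt (verit))
  qed simp
qed

lemma jacobi_roots_bounded:
  assumes "\<forall>j. \<bar>e j\<bar> \<le> B" "r \<in> jacobi_roots e m"
  shows "- B - 2 < r \<and> r < B + 2"
  using jacobi_poly_sign_outside[OF assms(1), of r m] assms(2) unfolding jacobi_roots_def by force

definition sign_follows_count :: "(nat \<Rightarrow> real) \<Rightarrow> nat \<Rightarrow> bool" where
  "sign_follows_count e m \<longleftrightarrow> (\<forall>E. poly (jacobi_poly e (Suc m)) E \<noteq> 0 \<longrightarrow>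
     (0 < poly (jacobi_poly e (Suc m)) E \<longleftrightarrow> even (jacobi_count e m E)))"

definition count_agrees_at_roots :: "(nat \<Rightarrow> real) \<Rightarrow> nat \<Rightarrow> bool" where
  "count_agrees_at_roots e m \<longleftrightarrow>
     (\<forall>r \<in> jacobi_roots e (Suc m). jacobi_count e m r = jacobi_count e (Suc m) r)"

lemma jacobi_poly_sign_at_root:
  assumes sign: "sign_follows_count e m" and agree: "count_agrees_at_roots e m"
    and r: "r \<in> jacobi_roots e (Suc m)"
  shows "poly (jacobi_poly e (Suc (Suc (Suc m)))) r \<noteq> 0 \<and>
    (0 < poly (jacobi_poly e (Suc (Suc (Suc m)))) r \<longleftrightarrow> odd (jacobi_count e (Suc m) r))"
proof -
  have f: "poly (jacobi_poly e (Suc (Suc m))) r = 0" using r unfolding jacobi_roots_def by simp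
  then have h: "poly (jacobi_poly e (Suc (Suc (Suc m)))) r = - poly (jacobi_poly e (Suc m)) r"
    using poly_jacobi_poly_Suc_Suc[of e "Suc m" r] by simp
  have g: "poly (jacobi_poly e (Suc m)) r \<noteq> 0" using jacobi_poly_no_common_root[of e m r] f by auto
  have "0 < poly (jacobi_poly e (Suc m)) r \<longleftrightarrow> even (jacobi_count e (Suc m) r)"
    using sign agree g r unfolding sign_follows_count_def count_agrees_at_roots_def by simp
  then show ?thesis using h g by auto
qed

lemma jacobi_alternating_points:
  assumes bnd: "\<forall>j. \<bar>e j\<bar> \<le> B"
    and sign: "sign_follows_count e m" and agree: "count_agrees_at_roots e m"
    and card: "card (jacobi_roots e (Suc m)) = Suc m"
  obtains p where "\<And>i j. i < j \<Longrightarrow> j \<le> Suc (Suc m) \<Longrightarrow> p i < p j"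
    "\<And>j. j \<le> Suc (Suc m) \<Longrightarrow> poly (jacobi_poly e (Suc (Suc (Suc m)))) (p j) \<noteq> 0 \<and>
       (0 < poly (jacobi_poly e (Suc (Suc (Suc m)))) (p j) \<longleftrightarrow> even j)"
    "jacobi_roots e (Suc m) = p ` {1..Suc m}"
proof -
  define R where "R = jacobi_roots e (Suc m)"
  define ys where "ys = sorted_list_of_set R"
  define p where "p j = (if j = 0 then - B - 2 else if j \<le> Suc m then ys ! (j - 1) else B + 2)"
    for j
  have finR: "finite R" unfolding R_def by (rule finite_jacobi_roots)
  have cardR: "card R = Suc m" unfolding R_def by (rule card)
  have p_in: "p j \<in> R" if "1 \<le> j" "j \<le> Suc m" for j
    unfolding p_def ys_def using nth_sorted_list_of_set_mem[OF finR] cardR that by auto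
  have p_range: "- B - 2 < p j \<and> p j < B + 2" if "1 \<le> j" "j \<le> Suc m" for j
    using jacobi_roots_bounded[OF bnd] p_in[OF that] unfolding R_def by blast
  have mono: "p i < p j" if ij: "i < j" "j \<le> Suc (Suc m)" for i j
  proof (cases "i = 0 \<or> j = Suc (Suc m)")
    case True
    have "0 \<le> B" using bnd by (metis abs_ge_zero order_trans)
    then show ?thesis using True p_range[of i] p_range[of j] ij unfolding p_def by auto
  next
    case False
    then show ?thesis
      using sorted_list_of_set_nth_less[OF finR, of "i - 1" "j - 1"] ij cardR
      unfolding p_def ys_def by auto
  qed
  have alternate: "poly (jacobi_poly e (Suc (Suc (Suc m)))) (p j) \<noteq> 0 \<and>
      (0 < poly (jacobi_poly e (Suc (Suc (Suc m)))) (p j) \<longleftrightarrow> even j)"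
    if j: "j \<le> Suc (Suc m)" for j
  proof (cases "j = 0 \<or> j = Suc (Suc m)")
    case True
    then show ?thesis
      using jacobi_poly_sign_outside[OF bnd, of "- B - 2" "Suc (Suc m)"]
        jacobi_poly_sign_outside[OF bnd, of "B + 2" "Suc (Suc m)"]
      unfolding p_def by auto
  next
    case False
    then have "j - 1 < Suc m" using j by arith
    then have "jacobi_count e (Suc m) (p j) = j - 1"
      using card_less_nth_sorted_list_of_set[OF finR, of "j - 1"] cardR False
      unfolding jacobi_count_def p_def ys_def R_def by simp
    then show ?thesis
      using jacobi_poly_sign_at_root[OF sign agree, of "p j"] p_in[of j] False j
      unfolding R_def by (cases j) auto
  qed
  have "R = (\<lambda>i. ys ! i) ` {..<Suc m}"
    using finR cardR unfolding ys_def
    by (metis atLeast_upt length_sorted_list_of_set list.set_map map_nth set_sorted_list_of_set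
      set_upt)
  also have "\<dots> = (\<lambda>i. p (Suc i)) ` {..<Suc m}" by (auto simp: p_def)
  also have "\<dots> = p ` {1..Suc m}" by (metis image_image image_Suc_lessThan)
  finally show thesis using that mono alternate unfolding R_def by blast
qed

lemma jacobi_sturm_step:
  assumes bnd: "\<forall>j. \<bar>e j\<bar> \<le> B"
    and sign: "sign_follows_count e m" and agree: "count_agrees_at_roots e m"
    and card: "card (jacobi_roots e (Suc m)) = Suc m"
  shows "sign_follows_count e (Suc (Suc m))" "count_agrees_at_roots e (Suc m)"
    "card (jacobi_roots e (Suc (Suc m))) = Suc (Suc m)"
    "jacobi_count e (Suc m) E \<le> jacobi_count e (Suc (Suc m)) E"
    "jacobi_count e (Suc (Suc m)) E \<le> jacobi_count e (Suc m) E + 1"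
proof -
  let ?h = "jacobi_poly e (Suc (Suc (Suc m)))"
  obtain p where mono: "\<And>i j. i < j \<Longrightarrow> j \<le> Suc (Suc m) \<Longrightarrow> p i < p j"
    and alternate: "\<And>j. j \<le> Suc (Suc m) \<Longrightarrow> poly ?h (p j) \<noteq> 0 \<and> (0 < poly ?h (p j) \<longleftrightarrow> even j)"
    and R: "jacobi_roots e (Suc m) = p ` {1..Suc m}"
    using jacobi_alternating_points[OF bnd sign agree card] by blast
  have "card {r. poly ?h r = 0} \<le> Suc (Suc m)"
    using card_jacobi_roots_le[of e "Suc (Suc m)"] unfolding jacobi_roots_def .
  then obtain z where il: "interlacing (Suc m) p z" and Z: "{r. poly ?h r = 0} = z ` {..Suc m}"
    using alternating_signs_interlaced_roots[where n="Suc m", OF mono alternate] by blast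
  interpret interlacing "Suc m" p z by (fact il)
  have inj_p: "inj_on p {1..Suc m}"
    by (intro inj_onI) (metis atLeastAtMost_iff le_SucI linorder_neqE_nat mono order.asym)
  have count_R: "jacobi_count e (Suc m) E = card {i \<in> {1..Suc m}. p i < E}" for E
    unfolding jacobi_count_def R by (rule card_image_filter[OF inj_p])
  have count_Z: "jacobi_count e (Suc (Suc m)) E = card {j \<in> {..Suc m}. z j < E}" for E
    unfolding jacobi_count_def jacobi_roots_def Z by (rule card_image_filter[OF inj_on_z])
  show "card (jacobi_roots e (Suc (Suc m))) = Suc (Suc m)"
    unfolding jacobi_roots_def Z using card_image[OF inj_on_z] by simp
  show "jacobi_count e (Suc m) E \<le> jacobi_count e (Suc (Suc m)) E"
    "jacobi_count e (Suc (Suc m)) E \<le> jacobi_count e (Suc m) E + 1"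
    unfolding count_R count_Z using count_bounds by auto
  show "count_agrees_at_roots e (Suc m)"
    unfolding count_agrees_at_roots_def jacobi_roots_def Z count_R count_Z using count_at by auto
  show "sign_follows_count e (Suc (Suc m))"
    unfolding sign_follows_count_def count_Z using sign_by_count[OF alternate Z] by blast
qed

lemma jacobi_sturm:
  assumes bnd: "\<forall>j. \<bar>e j\<bar> \<le> B"
  shows "sign_follows_count e m \<and> sign_follows_count e (Suc m) \<and> count_agrees_at_roots e m \<and>
    card (jacobi_roots e (Suc m)) = Suc m \<and>
    (\<forall>E. jacobi_count e m E \<le> jacobi_count e (Suc m) E \<and>
      jacobi_count e (Suc m) E \<le> jacobi_count e m E + 1)"
proof (induction m)
  case 0
  have roots1: "jacobi_roots e (Suc 0) = {e 0}"
    unfolding jacobi_roots_def using poly_jacobi_poly_2[of e] by (auto simp: numeral_2_eq_2)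
  have count0: "jacobi_count e 0 E = 0" for E unfolding jacobi_count_def jacobi_roots_def by simp
  have count1: "jacobi_count e (Suc 0) E = (if e 0 < E then 1 else 0)" for E
  proof -
    have "{r \<in> {e 0}. r < E} = (if e 0 < E then {e 0} else {})" by auto
    then show ?thesis unfolding jacobi_count_def roots1 by simp
  qed
  show ?case
    unfolding sign_follows_count_def count_agrees_at_roots_def roots1
    using count0 count1 poly_jacobi_poly_2[of e] by (simp add: numeral_2_eq_2)
next
  case (Suc m)
  then show ?case using jacobi_sturm_step[OF bnd, of m] by auto
qed

lemma card_jacobi_roots:
  assumes "\<forall>j. \<bar>e j\<bar> \<le> B"
  shows "card (jacobi_roots e m) = m"
proof (cases m)
  case 0
  then show ?thesis unfolding jacobi_roots_def by simp
next
  case (Suc k)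
  then show ?thesis using jacobi_sturm[OF assms, of k] by simp
qed

text \<open>Far from the diagonal the eigenvalue count below \<open>E\<close> is read off the diagonal itself,
  because each factor \<open>e j - E\<close> of the recursion then fixes a sign change.\<close>

lemma jacobi_count_dominant:
  assumes bnd: "\<forall>j. \<bar>e j\<bar> \<le> B" and dom: "\<forall>j<m. 2 \<le> \<bar>e j - E\<bar>"
  shows "jacobi_count e m E = card {j. j < m \<and> e j < E}"
  using dom
proof (induction m)
  case 0
  then show ?case unfolding jacobi_count_def jacobi_roots_def by simp
next
  case (Suc m)
  let ?g = "poly (jacobi_poly e (Suc m)) E" and ?f = "poly (jacobi_poly e (Suc (Suc m))) E"
  have g: "?g \<noteq> 0" and f: "?f \<noteq> 0" using jacobi_poly_dominant[OF Suc.prems] by auto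
  have sturm: "sign_follows_count e m" "sign_follows_count e (Suc m)"
    "jacobi_count e m E \<le> jacobi_count e (Suc m) E"
    "jacobi_count e (Suc m) E \<le> jacobi_count e m E + 1"
    using jacobi_sturm[OF bnd, of m] by auto
  have change: "?f * ?g < 0 \<longleftrightarrow> (0 < ?f \<longleftrightarrow> \<not> 0 < ?g)"
    using f g by (auto simp: mult_less_0_iff)
  have "jacobi_count e (Suc m) E = jacobi_count e m E + (if ?f * ?g < 0 then 1 else 0)"
  proof (cases "jacobi_count e (Suc m) E = jacobi_count e m E")
    case True
    then show ?thesis using sturm(1,2) f g change unfolding sign_follows_count_def by simp
  next
    case False
    then have "jacobi_count e (Suc m) E = Suc (jacobi_count e m E)" using sturm(3,4) by simp
    then show ?thesis using sturm(1,2) f g change unfolding sign_follows_count_def by simp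
  qed
  also have "\<dots> = card {j. j < m \<and> e j < E} + (if e m < E then 1 else 0)"
    using Suc jacobi_poly_dominant_sign_change[OF Suc.prems, of m] by simp
  also have "\<dots> = card {j. j < Suc m \<and> e j < E}"
  proof -
    have "{j. j < Suc m \<and> e j < E} = {j. j < m \<and> e j < E} \<union> (if e m < E then {m} else {})"
      by (auto simp: less_Suc_eq)
    then show ?thesis by (simp add: card_Un_disjoint)
  qed
  finally show ?case .
qed

section \<open>The Dirichlet eigenvalue problem on an interval\<close>

definition jacobi_eigvec :: "(int \<Rightarrow> real) \<Rightarrow> int \<Rightarrow> int \<Rightarrow> real \<Rightarrow> (int \<Rightarrow> real) \<Rightarrow> bool" where
  "jacobi_eigvec d a b E \<psi> \<longleftrightarrow> (\<forall>n. n \<notin> {a..b} \<longrightarrow> \<psi> n = 0) \<and> (\<exists>n. \<psi> n \<noteq> 0) \<and>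
     (\<forall>n\<in>{a..b}. - \<psi> (n + 1) - \<psi> (n - 1) + d n * \<psi> n = E * \<psi> n)"

definition jacobi_spectrum :: "(int \<Rightarrow> real) \<Rightarrow> int \<Rightarrow> int \<Rightarrow> real set" where
  "jacobi_spectrum d a b = {E. \<exists>\<psi>. jacobi_eigvec d a b E \<psi>}"

definition jacobi_eig :: "(int \<Rightarrow> real) \<Rightarrow> int \<Rightarrow> int \<Rightarrow> nat \<Rightarrow> real" where
  "jacobi_eig d a b j = sorted_list_of_set (jacobi_spectrum d a b) ! j"

text \<open>The diagonal of the Dirichlet restriction to \<open>[a, b]\<close>, indexed from \<open>0\<close>; the value \<open>0\<close>
  beyond the interval only serves to keep it bounded.\<close>

definition interval_diag :: "(int \<Rightarrow> real) \<Rightarrow> int \<Rightarrow> int \<Rightarrow> nat \<Rightarrow> real" where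
  "interval_diag d a b j = (if j < nat (b - a + 1) then d (a + int j) else 0)"

lemma interval_diag_bounded: "\<forall>j. \<bar>interval_diag d a b j\<bar> \<le> (\<Sum>n\<in>{a..b}. \<bar>d n\<bar>)"
proof
  fix j
  show "\<bar>interval_diag d a b j\<bar> \<le> (\<Sum>n\<in>{a..b}. \<bar>d n\<bar>)"
  proof (cases "j < nat (b - a + 1)")
    case True
    then have "a + int j \<in> {a..b}" by auto
    then have "\<bar>d (a + int j)\<bar> \<le> (\<Sum>n\<in>{a..b}. \<bar>d n\<bar>)" by (intro member_le_sum) auto
    then show ?thesis using True unfolding interval_diag_def by simp
  qed (simp add: interval_diag_def sum_nonneg)
qed

lemma interval_diag_nth: "i < nat (b - a + 1) \<Longrightarrow> interval_diag d a b i = d (a + int i)"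
  unfolding interval_diag_def by simp

text \<open>Solving the eigenvalue equation from the left boundary gives \<open>\<psi> (a + i) = \<psi> a * Q\<^sub>i\<^sub>+\<^sub>1(E)\<close>;
  the right boundary condition \<open>\<psi> (b + 1) = 0\<close> is then the vanishing of the characteristic
  polynomial.\<close>

lemma jacobi_eigvec_transfer:
  assumes ev: "jacobi_eigvec d a b E \<psi>" and i: "i \<le> nat (b - a + 1)"
  shows "\<psi> (a + int i) = \<psi> a * poly (jacobi_poly (interval_diag d a b) (Suc i)) E \<and>
    \<psi> (a + int i - 1) = \<psi> a * poly (jacobi_poly (interval_diag d a b) i) E"
  using i
proof (induction i)
  case 0
  then show ?case using ev unfolding jacobi_eigvec_def by simp
next
  case (Suc i)
  let ?e = "interval_diag d a b"
  have iN: "i < nat (b - a + 1)" using Suc.prems by simp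
  then have "a + int i \<in> {a..b}" by auto
  then have "\<psi> (a + int i + 1) = (d (a + int i) - E) * \<psi> (a + int i) - \<psi> (a + int i - 1)"
    using ev unfolding jacobi_eigvec_def by (auto simp: algebra_simps)
  also have "\<dots> = \<psi> a * ((?e i - E) * poly (jacobi_poly ?e (Suc i)) E - poly (jacobi_poly ?e i) E)"
    using Suc iN interval_diag_nth[OF iN] by (simp add: algebra_simps)
  also have "\<dots> = \<psi> a * poly (jacobi_poly ?e (Suc (Suc i))) E"
    by (simp only: poly_jacobi_poly_Suc_Suc)
  finally have "\<psi> (a + int i + 1) = \<psi> a * poly (jacobi_poly ?e (Suc (Suc i))) E" .
  moreover have "a + int (Suc i) = a + int i + 1" "a + int (Suc i) - 1 = a + int i" by simp_all
  moreover have "\<psi> (a + int i) = \<psi> a * poly (jacobi_poly ?e (Suc i)) E" using Suc iN by simp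
  ultimately show ?case by metis
qed

lemma jacobi_eigvec_of_root:
  assumes ab: "a \<le> b"
    and root: "poly (jacobi_poly (interval_diag d a b) (Suc (nat (b - a + 1)))) E = 0"
  shows "jacobi_eigvec d a b E
    (\<lambda>n. if n \<in> {a..b} then poly (jacobi_poly (interval_diag d a b) (Suc (nat (n - a)))) E else 0)"
    (is "jacobi_eigvec d a b E ?\<phi>")
  unfolding jacobi_eigvec_def
proof (intro conjI ballI allI impI)
  let ?e = "interval_diag d a b"
  show "\<And>n. n \<notin> {a..b} \<Longrightarrow> ?\<phi> n = 0" by auto
  show "\<exists>n. ?\<phi> n \<noteq> 0" by (rule exI[of _ a]) (use ab in simp)
  fix n assume n: "n \<in> {a..b}"
  define i where "i = nat (n - a)"
  have iN: "i < nat (b - a + 1)" and ni: "n = a + int i" using n unfolding i_def by auto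
  have p0: "?\<phi> n = poly (jacobi_poly ?e (Suc i)) E" unfolding i_def using n by simp
  have p1: "?\<phi> (n + 1) = poly (jacobi_poly ?e (Suc (Suc i))) E"
  proof (cases "n + 1 \<le> b")
    case True
    then have "nat (n + 1 - a) = Suc i" using n unfolding i_def by auto
    then show ?thesis using True n by simp
  next
    case False
    then have "Suc i = nat (b - a + 1)" using n unfolding i_def by auto
    then show ?thesis using False root by auto
  qed
  have p2: "?\<phi> (n - 1) = poly (jacobi_poly ?e i) E"
  proof (cases "a \<le> n - 1")
    case True
    then have "Suc (nat (n - 1 - a)) = i" using n unfolding i_def by auto
    then show ?thesis using True n by simp
  next
    case False
    then have "i = 0" using n unfolding i_def by auto
    then show ?thesis using False by auto
  qed
  show "- ?\<phi> (n + 1) - ?\<phi> (n - 1) + d n * ?\<phi> n = E * ?\<phi> n"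
    using p0 p1 p2 interval_diag_nth[OF iN] ni poly_jacobi_poly_Suc_Suc[of ?e i E]
    by (simp add: algebra_simps)
qed

lemma jacobi_spectrum_eq_roots:
  assumes ab: "a \<le> b"
  shows "jacobi_spectrum d a b = jacobi_roots (interval_diag d a b) (nat (b - a + 1))"
proof (intro set_eqI iffI)
  let ?e = "interval_diag d a b" and ?N = "nat (b - a + 1)"
  fix E
  show "E \<in> jacobi_spectrum d a b" if "E \<in> jacobi_roots ?e ?N"
    using jacobi_eigvec_of_root[OF ab] that unfolding jacobi_spectrum_def jacobi_roots_def by blast
  assume "E \<in> jacobi_spectrum d a b"
  then obtain \<psi> where ev: "jacobi_eigvec d a b E \<psi>" unfolding jacobi_spectrum_def by blast
  have "poly (jacobi_poly ?e (Suc ?N)) E = 0"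
  proof (rule ccontr)
    assume ne: "poly (jacobi_poly ?e (Suc ?N)) E \<noteq> 0"
    have "\<psi> (a + int ?N) = 0" using ev ab unfolding jacobi_eigvec_def by auto
    then have "\<psi> a = 0" using jacobi_eigvec_transfer[OF ev, of ?N] ne by simp
    then have "\<psi> n = 0" if "n \<in> {a..b}" for n
      using jacobi_eigvec_transfer[OF ev, of "nat (n - a)"] that by auto
    then show False using ev unfolding jacobi_eigvec_def by blast
  qed
  then show "E \<in> jacobi_roots ?e ?N" unfolding jacobi_roots_def by simp
qed

lemma finite_jacobi_spectrum: "a \<le> b \<Longrightarrow> finite (jacobi_spectrum d a b)"
  using jacobi_spectrum_eq_roots finite_jacobi_roots by simp

lemma card_jacobi_spectrum: "a \<le> b \<Longrightarrow> card (jacobi_spectrum d a b) = nat (b - a + 1)"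
  using jacobi_spectrum_eq_roots card_jacobi_roots[OF interval_diag_bounded] by simp

lemma jacobi_spectrum_count_dominant:
  assumes ab: "a \<le> b" and dom: "\<forall>n\<in>{a..b}. 2 \<le> \<bar>d n - E\<bar>"
  shows "card {r \<in> jacobi_spectrum d a b. r < E} = card {n \<in> {a..b}. d n < E}"
    and "E \<notin> jacobi_spectrum d a b"
proof -
  define N where "N = nat (b - a + 1)"
  define e where "e = interval_diag d a b"
  have dom_e: "\<forall>j<N. 2 \<le> \<bar>e j - E\<bar>"
  proof (intro allI impI)
    fix j assume "j < N"
    then have "a + int j \<in> {a..b}" "e j = d (a + int j)"
      unfolding N_def e_def interval_diag_def by auto
    then show "2 \<le> \<bar>e j - E\<bar>" using dom by simp
  qed
  have "card {j. j < N \<and> e j < E} = card {n \<in> {a..b}. d n < E}"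
  proof -
    have "{n \<in> {a..b}. d n < E} = (\<lambda>j. a + int j) ` {j. j < N \<and> e j < E}"
    proof (intro set_eqI iffI)
      fix n assume n: "n \<in> {n \<in> {a..b}. d n < E}"
      then have "nat (n - a) \<in> {j. j < N \<and> e j < E}"
        unfolding N_def e_def interval_diag_def by auto
      moreover have "n = a + int (nat (n - a))" using n by auto
      ultimately show "n \<in> (\<lambda>j. a + int j) ` {j. j < N \<and> e j < E}" by blast
    qed (auto simp: N_def e_def interval_diag_def)
    moreover have "inj (\<lambda>j. a + int j)" by (auto simp: inj_on_def)
    ultimately show ?thesis by (simp add: card_image inj_on_subset)
  qed
  then show "card {r \<in> jacobi_spectrum d a b. r < E} = card {n \<in> {a..b}. d n < E}"
    using jacobi_count_dominant[OF interval_diag_bounded dom_e[unfolded e_def]] ab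
    unfolding jacobi_count_def jacobi_spectrum_eq_roots[OF ab] e_def N_def by simp
  show "E \<notin> jacobi_spectrum d a b"
    using jacobi_poly_dominant[OF dom_e, of N] ab
    unfolding jacobi_spectrum_eq_roots[OF ab] jacobi_roots_def e_def N_def by simp
qed

lemma jacobi_eigvec_normalized:
  assumes "E \<in> jacobi_spectrum d a b"
  obtains \<psi> where "jacobi_eigvec d a b E \<psi>" "(\<Sum>n=a..b. (\<psi> n)^2) = 1" "0 \<le> \<psi> 0"
proof -
  obtain \<phi> where zero: "\<forall>n. n \<notin> {a..b} \<longrightarrow> \<phi> n = 0" and nz: "\<exists>n. \<phi> n \<noteq> 0"
    and eq: "\<forall>n\<in>{a..b}. - \<phi> (n + 1) - \<phi> (n - 1) + d n * \<phi> n = E * \<phi> n"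
    using assms unfolding jacobi_spectrum_def jacobi_eigvec_def by blast
  define s where "s = (\<Sum>n=a..b. (\<phi> n)^2)"
  obtain n0 where n0: "\<phi> n0 \<noteq> 0" using nz by blast
  then have "n0 \<in> {a..b}" using zero by blast
  then have "(\<phi> n0)^2 \<le> s" unfolding s_def by (intro member_le_sum) auto
  then have s: "0 < s" using n0 by (smt (verit) zero_less_power2)
  define c where "c = (if 0 \<le> \<phi> 0 then 1 else -1) / sqrt s"
  have c: "c \<noteq> 0" "c^2 = 1 / s" unfolding c_def using s by (auto simp: power_divide)
  show thesis
  proof (rule that[of "\<lambda>n. c * \<phi> n"])
    show "jacobi_eigvec d a b E (\<lambda>n. c * \<phi> n)"
      unfolding jacobi_eigvec_def using zero nz eq c by (auto simp: algebra_simps)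
    have "(\<Sum>n=a..b. (c * \<phi> n)^2) = c^2 * s" unfolding s_def
      by (simp add: power_mult_distrib sum_distrib_left)
    then show "(\<Sum>n=a..b. (c * \<phi> n)^2) = 1" using c s by simp
    show "0 \<le> c * \<phi> 0" unfolding c_def using s by (simp add: zero_le_mult_iff)
  qed
qed

lemma abs_le_one_of_sum_squares:
  fixes \<psi> :: "int \<Rightarrow> real"
  assumes "\<forall>n. n \<notin> {a..b} \<longrightarrow> \<psi> n = 0" "(\<Sum>n=a..b. (\<psi> n)^2) = 1"
  shows "\<bar>\<psi> n\<bar> \<le> 1"
proof (cases "n \<in> {a..b}")
  case True
  then have "(\<psi> n)^2 \<le> (\<Sum>n=a..b. (\<psi> n)^2)" by (intro member_le_sum) auto
  then show ?thesis using assms(2) by (simp add: abs_square_le_1)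
qed (use assms(1) in simp)

lemma sum_abs_shift_le:
  fixes \<psi> :: "int \<Rightarrow> real"
  assumes zero: "\<forall>n. n \<notin> {a..b} \<longrightarrow> \<psi> n = 0" and A: "A \<subseteq> {a..b}"
  shows "(\<Sum>n\<in>A. \<bar>\<psi> (n + s)\<bar>) \<le> (\<Sum>n\<in>{a..b}. \<bar>\<psi> n\<bar>)"
proof -
  have finA: "finite A" using A finite_subset by blast
  have "(\<Sum>n\<in>A. \<bar>\<psi> (n + s)\<bar>) = (\<Sum>m\<in>(\<lambda>n. n + s) ` A. \<bar>\<psi> m\<bar>)"
    by (simp add: sum.reindex inj_on_def)
  also have "\<dots> = (\<Sum>m\<in>(\<lambda>n. n + s) ` A \<inter> {a..b}. \<bar>\<psi> m\<bar>)"
    by (rule sum.mono_neutral_right) (use zero finA in auto)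
  also have "\<dots> \<le> (\<Sum>n\<in>{a..b}. \<bar>\<psi> n\<bar>)"
    by (rule sum_mono2) auto
  finally show ?thesis .
qed

lemma jacobi_eigvec_site_bound:
  assumes "jacobi_eigvec d a b E \<psi>" "n \<in> {a..b}" "\<Lambda> / 2 \<le> \<bar>d n - E\<bar>" "0 < \<Lambda>"
  shows "\<bar>\<psi> n\<bar> \<le> 2 / \<Lambda> * (\<bar>\<psi> (n + 1)\<bar> + \<bar>\<psi> (n - 1)\<bar>)"
proof -
  have "(d n - E) * \<psi> n = \<psi> (n + 1) + \<psi> (n - 1)"
    using assms(1,2) unfolding jacobi_eigvec_def by (auto simp: algebra_simps)
  then have "\<bar>d n - E\<bar> * \<bar>\<psi> n\<bar> \<le> \<bar>\<psi> (n + 1)\<bar> + \<bar>\<psi> (n - 1)\<bar>"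
    by (metis abs_mult abs_triangle_ineq)
  moreover have "\<Lambda> / 2 * \<bar>\<psi> n\<bar> \<le> \<bar>d n - E\<bar> * \<bar>\<psi> n\<bar>"
    using assms(3) by (intro mult_right_mono) auto
  ultimately show ?thesis using assms(4) by (simp add: field_simps)
qed

lemma jacobi_eigvec_off_site_mass:
  assumes ab: "0 \<in> {a..b}" and ev: "jacobi_eigvec d a b E \<psi>" and norm: "(\<Sum>n=a..b. (\<psi> n)^2) = 1"
    and L16: "16 \<le> \<Lambda>" and gap: "\<forall>n\<in>{a..b}. n \<noteq> 0 \<longrightarrow> \<Lambda> / 2 \<le> \<bar>d n - E\<bar>"
  shows "(\<Sum>n\<in>{a..b} - {0}. \<bar>\<psi> n\<bar>) \<le> 8 / \<Lambda>"
proof -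
  define A where "A = {a..b} - {0}"
  define W where "W = (\<Sum>n\<in>A. \<bar>\<psi> n\<bar>)"
  have zero: "\<forall>n. n \<notin> {a..b} \<longrightarrow> \<psi> n = 0" using ev unfolding jacobi_eigvec_def by blast
  have W0: "0 \<le> W" unfolding W_def by (simp add: sum_nonneg)
  have total: "(\<Sum>n\<in>{a..b}. \<bar>\<psi> n\<bar>) \<le> W + 1"
    using abs_le_one_of_sum_squares[OF zero norm, of 0] ab
    unfolding W_def A_def by (simp add: sum.remove[of "{a..b}" 0])
  have site: "\<bar>\<psi> n\<bar> \<le> 2 / \<Lambda> * (\<bar>\<psi> (n + 1)\<bar> + \<bar>\<psi> (n + -1)\<bar>)" if "n \<in> A" for n
    using jacobi_eigvec_site_bound[OF ev, of n \<Lambda>] gap L16 that unfolding A_def by simp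
  have "W \<le> (\<Sum>n\<in>A. 2 / \<Lambda> * (\<bar>\<psi> (n + 1)\<bar> + \<bar>\<psi> (n + -1)\<bar>))"
    unfolding W_def using site by (rule sum_mono)
  also have "\<dots> = 2 / \<Lambda> * ((\<Sum>n\<in>A. \<bar>\<psi> (n + 1)\<bar>) + (\<Sum>n\<in>A. \<bar>\<psi> (n + -1)\<bar>))"
    by (simp only: sum.distrib[symmetric] sum_distrib_left)
  also have "\<dots> \<le> 2 / \<Lambda> * (2 * W + 2)"
    using sum_abs_shift_le[OF zero, of A 1] sum_abs_shift_le[OF zero, of A "-1"] total L16
    by (intro mult_left_mono) (auto simp: A_def)
  finally have "\<Lambda> * W \<le> 4 * W + 4" using L16 by (simp add: field_simps)
  moreover have "W * (\<Lambda> / 2) \<le> W * (\<Lambda> - 4)" using L16 W0 by (intro mult_left_mono) auto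
  ultimately have "W * \<Lambda> \<le> 8" by (simp add: algebra_simps)
  then show ?thesis using L16 unfolding W_def A_def by (simp add: field_simps)
qed

text \<open>Maximum principle: the worst ratio \<open>\<bar>f n\<bar> / q ^ \<bar>n\<bar>\<close> over \<open>A\<close> is at most \<open>2 \<kappa> / q\<close>
  times itself (or \<open>1\<close>), hence below \<open>1\<close>.\<close>

lemma exponential_decay_from_neighbours:
  fixes f :: "int \<Rightarrow> real" and A :: "int set"
  assumes fin: "finite A" and A0: "0 \<notin> A" and zero: "\<And>n. n \<notin> A \<Longrightarrow> n \<noteq> 0 \<Longrightarrow> f n = 0"
    and bound: "\<And>n. \<bar>f n\<bar> \<le> 1"
    and rel: "\<And>n. n \<in> A \<Longrightarrow> \<bar>f n\<bar> \<le> \<kappa> * (\<bar>f (n + 1)\<bar> + \<bar>f (n - 1)\<bar>)"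
    and \<kappa>: "0 \<le> \<kappa>" and q: "0 < q" "q \<le> 1" "2 * \<kappa> < q"
    and n: "n \<in> A"
  shows "\<bar>f n\<bar> < q ^ nat \<bar>n\<bar>"
proof -
  define g where "g n = \<bar>f n\<bar> / q ^ nat \<bar>n\<bar>" for n
  define M where "M = Max (g ` A)"
  have qpos: "0 < q ^ k" for k using q by simp
  have M: "\<bar>f n\<bar> \<le> M * q ^ nat \<bar>n\<bar>" if "n \<in> A" for n
  proof -
    have "g n \<le> M" unfolding M_def using that fin by simp
    then show ?thesis unfolding g_def using qpos[of "nat \<bar>n\<bar>"] by (simp add: field_simps)
  qed
  have "M \<in> g ` A" unfolding M_def using fin n by (intro Max_in) auto
  then obtain n0 where n0: "n0 \<in> A" "M = g n0" by blast
  have M0: "0 \<le> M" using n0 qpos[of "nat \<bar>n0\<bar>"] unfolding g_def by simp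
  define K where "K = nat \<bar>n0\<bar>"
  have "n0 \<noteq> 0" using n0 A0 by blast
  then have K: "q ^ K = q * q ^ (K - 1)" unfolding K_def by (simp add: power_eq_if)
  have neighbour: "\<bar>f s\<bar> \<le> max M 1 * q ^ (K - 1)" if "s = n0 + 1 \<or> s = n0 - 1" for s
  proof (cases "s \<in> A")
    case True
    have "K - 1 \<le> nat \<bar>s\<bar>" using that unfolding K_def by auto
    then have "q ^ nat \<bar>s\<bar> \<le> q ^ (K - 1)" using q by (intro power_decreasing) auto
    then have "M * q ^ nat \<bar>s\<bar> \<le> max M 1 * q ^ (K - 1)"
      using M0 qpos[of "nat \<bar>s\<bar>"] by (intro mult_mono) auto
    then show ?thesis using M[OF True] by linarith
  next
    case False
    show ?thesis
    proof (cases "s = 0")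
      case True
      then have "K = 1" using that unfolding K_def by auto
      then show ?thesis using bound[of s] by simp
    qed (use zero False qpos[of "K - 1"] in \<open>simp add: zero_le_mult_iff\<close>)
  qed
  have "M * q * q ^ (K - 1) = \<bar>f n0\<bar>"
    using n0 qpos[of K] K q(1) unfolding g_def K_def by (simp add: field_simps)
  also have "\<dots> \<le> \<kappa> * (\<bar>f (n0 + 1)\<bar> + \<bar>f (n0 - 1)\<bar>)" using rel n0 by simp
  also have "\<dots> \<le> \<kappa> * (2 * (max M 1 * q ^ (K - 1)))"
    using neighbour[of "n0 + 1"] neighbour[of "n0 - 1"] \<kappa> by (intro mult_left_mono) auto
  finally have "M * q \<le> 2 * \<kappa> * max M 1"
    using qpos[of "K - 1"] by (simp add: algebra_simps)
  have "M < 1"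
  proof (rule ccontr)
    assume "\<not> M < 1"
    then have "M * q \<le> M * (2 * \<kappa>)" using \<open>M * q \<le> 2 * \<kappa> * max M 1\<close> by (simp add: mult.commute)
    then have "q \<le> 2 * \<kappa>" using \<open>\<not> M < 1\<close> by (simp add: mult_le_cancel_left_pos)
    then show False using q by simp
  qed
  then have "M * q ^ nat \<bar>n\<bar> < 1 * q ^ nat \<bar>n\<bar>" using qpos by (intro mult_strict_right_mono) auto
  then show ?thesis using M[OF n] by simp
qed

lemma jacobi_eigvec_localized:
  assumes ab: "a < 0" "0 < b" and ev: "jacobi_eigvec d a b E \<psi>" and norm: "(\<Sum>n=a..b. (\<psi> n)^2) = 1"
    and pos: "0 \<le> \<psi> 0" and L16: "16 \<le> \<Lambda>" and q: "0 < q" "q < 1" "8 < \<Lambda> * q"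
    and gap: "\<forall>n\<in>{a..b}. n \<noteq> 0 \<longrightarrow> \<Lambda> / 2 \<le> \<bar>d n - E\<bar>"
  shows "\<bar>E - d 0\<bar> \<le> 2" "\<forall>n\<in>{a..b}. n \<noteq> 0 \<longrightarrow> \<bar>\<psi> n\<bar> < q ^ nat \<bar>n\<bar>" "\<bar>\<psi> 0 - 1\<bar> < q"
proof -
  define A where "A = {a..b} - {0}"
  define W where "W = (\<Sum>n\<in>A. \<bar>\<psi> n\<bar>)"
  have zero: "\<forall>n. n \<notin> {a..b} \<longrightarrow> \<psi> n = 0" using ev unfolding jacobi_eigvec_def by blast
  have bound: "\<bar>\<psi> n\<bar> \<le> 1" for n by (rule abs_le_one_of_sum_squares[OF zero norm])
  have W: "W \<le> 8 / \<Lambda>"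
    using jacobi_eigvec_off_site_mass[OF _ ev norm L16 gap] ab unfolding W_def A_def by simp
  have half: "8 / \<Lambda> \<le> 1 / 2" using L16 by (simp add: field_simps)
  have "(\<Sum>n\<in>A. (\<psi> n)^2) \<le> W"
    unfolding W_def
  proof (rule sum_mono)
    fix n
    have "(\<psi> n)^2 = \<bar>\<psi> n\<bar> * \<bar>\<psi> n\<bar>" by (simp add: power2_eq_square)
    also have "\<dots> \<le> 1 * \<bar>\<psi> n\<bar>" using bound[of n] by (intro mult_right_mono) auto
    finally show "(\<psi> n)^2 \<le> \<bar>\<psi> n\<bar>" by simp
  qed
  moreover have "1 = (\<psi> 0)^2 + (\<Sum>n\<in>A. (\<psi> n)^2)"
    using norm ab unfolding A_def by (simp add: sum.remove[of "{a..b}" 0])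
  moreover have "(\<psi> 0)^2 \<le> \<psi> 0" "\<psi> 0 \<le> 1"
    using bound[of 0] pos by (auto simp: power2_eq_square mult_left_le_one_le)
  ultimately have psi0: "1 - W \<le> \<psi> 0" "\<psi> 0 \<le> 1" by linarith+
  show "\<bar>\<psi> 0 - 1\<bar> < q"
  proof -
    have "8 / \<Lambda> < q" using q L16 by (simp add: field_simps)
    then show ?thesis using psi0 W by simp
  qed
  show "\<bar>E - d 0\<bar> \<le> 2"
  proof -
    have "(d 0 - E) * \<psi> 0 = \<psi> 1 + \<psi> (-1)"
      using ev ab unfolding jacobi_eigvec_def by (auto simp: algebra_simps)
    then have "\<bar>d 0 - E\<bar> * \<psi> 0 \<le> \<bar>\<psi> 1\<bar> + \<bar>\<psi> (-1)\<bar>"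
      using pos by (metis abs_mult abs_of_nonneg abs_triangle_ineq)
    also have "\<dots> = (\<Sum>n\<in>{1, -1}. \<bar>\<psi> n\<bar>)" by simp
    also have "\<dots> \<le> W" unfolding W_def A_def using ab by (intro sum_mono2) auto
    finally have "\<bar>d 0 - E\<bar> * \<psi> 0 \<le> W" .
    moreover have "\<bar>d 0 - E\<bar> * (1/2) \<le> \<bar>d 0 - E\<bar> * \<psi> 0"
      using psi0 W half by (intro mult_left_mono) auto
    ultimately show ?thesis using W half by (simp add: abs_minus_commute)
  qed
  have site: "\<bar>\<psi> n\<bar> \<le> 2 / \<Lambda> * (\<bar>\<psi> (n + 1)\<bar> + \<bar>\<psi> (n - 1)\<bar>)" if "n \<in> A" for n
    using jacobi_eigvec_site_bound[OF ev, of n \<Lambda>] gap L16 that unfolding A_def by simp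
  have off: "\<psi> n = 0" if "n \<notin> A" "n \<noteq> 0" for n using zero that unfolding A_def by simp
  have "2 * (2 / \<Lambda>) < q" using q L16 by (simp add: field_simps)
  then show "\<forall>n\<in>{a..b}. n \<noteq> 0 \<longrightarrow> \<bar>\<psi> n\<bar> < q ^ nat \<bar>n\<bar>"
    using exponential_decay_from_neighbours[of A \<psi> "2 / \<Lambda>" q] off bound site L16 q
    unfolding A_def by simp
qed

lemma jacobi_eigenvalue_window:
  assumes ab: "a \<le> b" and E12: "E1 < E2"
    and dom1: "\<forall>n\<in>{a..b}. 2 \<le> \<bar>d n - E1\<bar>" and dom2: "\<forall>n\<in>{a..b}. 2 \<le> \<bar>d n - E2\<bar>"
    and count: "card {n \<in> {a..b}. d n < E2} = Suc (card {n \<in> {a..b}. d n < E1})"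
  defines "k \<equiv> card {n \<in> {a..b}. d n < E1}"
  shows "k < nat (b - a + 1)" "E1 < jacobi_eig d a b k" "jacobi_eig d a b k < E2"
    and "\<And>j. j < k \<Longrightarrow> jacobi_eig d a b j < E1"
    and "\<And>j. k < j \<Longrightarrow> j < nat (b - a + 1) \<Longrightarrow> E2 < jacobi_eig d a b j"
proof -
  define S where "S = jacobi_spectrum d a b"
  have finS: "finite S" and cardS: "card S = nat (b - a + 1)"
    unfolding S_def using finite_jacobi_spectrum[OF ab] card_jacobi_spectrum[OF ab] by auto
  have eig: "jacobi_eig d a b j = sorted_list_of_set S ! j" for j unfolding jacobi_eig_def S_def ..
  have count1: "card {r \<in> S. r < E1} = k" and count2: "card {r \<in> S. r < E2} = Suc k"
    unfolding S_def k_def using jacobi_spectrum_count_dominant(1)[OF ab] dom1 dom2 count by simp_all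
  have E1S: "E1 \<notin> S" and E2S: "E2 \<notin> S"
    unfolding S_def using jacobi_spectrum_count_dominant(2)[OF ab] dom1 dom2 by simp_all
  define M where "M = {r \<in> S. E1 \<le> r \<and> r < E2}"
  have "{r \<in> S. r < E2} = {r \<in> S. r < E1} \<union> M" "{r \<in> S. r < E1} \<inter> M = {}"
    unfolding M_def using E12 by auto
  then have "card M = 1" using count1 count2 finS by (simp add: card_Un_disjoint M_def)
  then obtain E where M: "M = {E}" by (rule card_1_singletonE)
  then have "E \<in> M" by simp
  then have ES: "E \<in> S" and "E1 \<le> E" "E < E2" unfolding M_def by auto
  then have E: "E1 < E" "E < E2" using E1S by (metis order.order_iff_strict)+
  have other: "r < E1 \<or> E2 < r" if "r \<in> S" "r \<noteq> E" for r
  proof -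
    have "r \<notin> M" "r \<noteq> E2" using that M E2S by auto
    then show ?thesis using that unfolding M_def by auto
  qed
  have "r < E \<longleftrightarrow> r < E1" if "r \<in> S" for r
    using other[OF that] E by (cases "r = E") auto
  then have "{r \<in> S. r < E} = {r \<in> S. r < E1}" by blast
  then have Ek: "jacobi_eig d a b k = E" and kN: "k < card S"
    using nth_sorted_list_of_set_card_less[OF finS ES] count1 unfolding eig by auto
  then show "k < nat (b - a + 1)" "E1 < jacobi_eig d a b k" "jacobi_eig d a b k < E2"
    using cardS E by auto
  have eig_other: "jacobi_eig d a b j < E1 \<or> E2 < jacobi_eig d a b j" if "j < card S" "j \<noteq> k" for j
    using that kN Ek other nth_sorted_list_of_set_mem[OF finS, of j]
      nth_eq_iff_index_eq[OF distinct_sorted_list_of_set[of S], of j k]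
    unfolding eig by auto
  show "jacobi_eig d a b j < E1" if "j < k" for j
    using eig_other[of j] sorted_list_of_set_nth_less[OF finS that kN] that kN Ek E
    unfolding eig by auto
  show "E2 < jacobi_eig d a b j" if "k < j" "j < nat (b - a + 1)" for j
    using eig_other[of j] sorted_list_of_set_nth_less[OF finS, of k j] that cardS Ek E
    unfolding eig by auto
qed

lemma jacobi_isolated_eigenvalue:
  assumes ab: "a \<le> 0" "0 \<le> b" and L16: "16 \<le> \<Lambda>"
    and gap: "\<forall>n\<in>{a..b}. n \<noteq> 0 \<longrightarrow> 3 * \<Lambda> / 4 \<le> \<bar>d n - d 0\<bar>"
  defines "k \<equiv> card {n \<in> {a..b}. d n < d 0}"
  shows "k < nat (b - a + 1)" "\<bar>jacobi_eig d a b k - d 0\<bar> < \<Lambda> / 4"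
    and "\<And>j. j < nat (b - a + 1) \<Longrightarrow> j \<noteq> k \<Longrightarrow> \<Lambda> / 4 < \<bar>jacobi_eig d a b j - d 0\<bar>"
    and "\<And>j. k = 0 \<Longrightarrow> j < nat (b - a + 1) \<Longrightarrow> j \<noteq> 0 \<Longrightarrow> d 0 + \<Lambda> / 4 < jacobi_eig d a b j"
proof -
  define E1 where "E1 = d 0 - \<Lambda> / 4"
  define E2 where "E2 = d 0 + \<Lambda> / 4"
  have far: "3 * \<Lambda> / 4 \<le> \<bar>d n - d 0\<bar>" if "n \<in> {a..b}" "n \<noteq> 0" for n using gap that by blast
  have dom: "\<forall>n\<in>{a..b}. 2 \<le> \<bar>d n - E1\<bar>" "\<forall>n\<in>{a..b}. 2 \<le> \<bar>d n - E2\<bar>"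
  proof (safe)
    fix n assume "n \<in> {a..b}"
    then show "2 \<le> \<bar>d n - E1\<bar>" "2 \<le> \<bar>d n - E2\<bar>"
      using far[of n] L16 unfolding E1_def E2_def by (cases "n = 0"; simp; linarith)+
  qed
  have side: "(d n < E1 \<longleftrightarrow> d n < d 0) \<and> (d n < E2 \<longleftrightarrow> d n < d 0 \<or> n = 0)" if "n \<in> {a..b}" for n
  proof (cases "n = 0")
    case False
    then have "d n < E1 \<or> E2 < d n" using far[OF that] L16 unfolding E1_def E2_def by linarith
    then show ?thesis using False L16 unfolding E1_def E2_def by auto
  qed (use L16 in \<open>simp add: E1_def E2_def\<close>)
  have k: "card {n \<in> {a..b}. d n < E1} = k" unfolding k_def using side by (metis (lifting))
  have "{n \<in> {a..b}. d n < E2} = insert 0 {n \<in> {a..b}. d n < d 0}" using side ab by auto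
  moreover have "card (insert 0 {n \<in> {a..b}. d n < d 0}) = Suc k"
    unfolding k_def by (rule card_insert_disjoint) (auto intro: finite_subset[of _ "{a..b}"])
  ultimately have step: "card {n \<in> {a..b}. d n < E2} = Suc (card {n \<in> {a..b}. d n < E1})"
    using k by simp
  have "a \<le> b" "E1 < E2" using ab L16 unfolding E1_def E2_def by simp_all
  note window = jacobi_eigenvalue_window[OF this dom step, unfolded k]
  show "k < nat (b - a + 1)" by (rule window(1))
  show "\<bar>jacobi_eig d a b k - d 0\<bar> < \<Lambda> / 4" using window(2,3) unfolding E1_def E2_def by linarith
  show "\<Lambda> / 4 < \<bar>jacobi_eig d a b j - d 0\<bar>" if "j < nat (b - a + 1)" "j \<noteq> k" for j
  proof (cases "j < k")
    case True
    then show ?thesis using window(4)[of j] unfolding E1_def by linarith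
  next
    case False
    then show ?thesis using window(5)[of j] that unfolding E2_def by linarith
  qed
  show "d 0 + \<Lambda> / 4 < jacobi_eig d a b j" if "k = 0" "j < nat (b - a + 1)" "j \<noteq> 0" for j
    using window(5)[of j] that unfolding E2_def by simp
qed

lemma jacobi_isolated_eigvec:
  assumes ab: "a < 0" "0 < b" and L16: "16 \<le> \<Lambda>" and q: "0 < q" "q < 1" "8 < \<Lambda> * q"
    and gap: "\<forall>n\<in>{a..b}. n \<noteq> 0 \<longrightarrow> 3 * \<Lambda> / 4 \<le> \<bar>d n - d 0\<bar>"
  defines "k \<equiv> card {n \<in> {a..b}. d n < d 0}"
  shows "k < nat (b - a + 1)"
    and "\<exists>\<psi>. jacobi_eigvec d a b (jacobi_eig d a b k) \<psi> \<and> (\<Sum>n=a..b. (\<psi> n)^2) = 1 \<and>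
      \<bar>jacobi_eig d a b k - d 0\<bar> \<le> 2 \<and> (\<forall>n\<in>{a..b}. n \<noteq> 0 \<longrightarrow> \<bar>\<psi> n\<bar> < q ^ nat \<bar>n\<bar>) \<and>
      \<bar>\<psi> 0 - 1\<bar> < q"
    and "\<And>j. j < nat (b - a + 1) \<Longrightarrow> j \<noteq> k \<Longrightarrow> \<Lambda> / 8 \<le> \<bar>jacobi_eig d a b j - jacobi_eig d a b k\<bar>"
    and "\<And>j. k = 0 \<Longrightarrow> j < nat (b - a + 1) \<Longrightarrow> j \<noteq> 0 \<Longrightarrow> \<Lambda> / 8 \<le> jacobi_eig d a b j - jacobi_eig d a b k"
proof -
  have ab': "a \<le> 0" "0 \<le> b" using ab by simp_all
  note iso = jacobi_isolated_eigenvalue[OF ab' L16 gap, folded k_def]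
  let ?E = "jacobi_eig d a b k"
  show kN: "k < nat (b - a + 1)" by (rule iso(1))
  have "?E \<in> jacobi_spectrum d a b"
    using nth_sorted_list_of_set_mem[OF finite_jacobi_spectrum] card_jacobi_spectrum kN ab
    unfolding jacobi_eig_def by simp
  then obtain \<psi> where ev: "jacobi_eigvec d a b ?E \<psi>" and norm: "(\<Sum>n=a..b. (\<psi> n)^2) = 1"
    and pos: "0 \<le> \<psi> 0" by (rule jacobi_eigvec_normalized)
  have "\<Lambda> / 2 \<le> \<bar>d n - ?E\<bar>" if "n \<in> {a..b}" "n \<noteq> 0" for n
  proof -
    have "3 * \<Lambda> / 4 \<le> \<bar>d n - d 0\<bar>" using gap that by blast
    then show ?thesis using iso(2) by linarith
  qed
  then have "\<forall>n\<in>{a..b}. n \<noteq> 0 \<longrightarrow> \<Lambda> / 2 \<le> \<bar>d n - ?E\<bar>" by blast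
  note loc = jacobi_eigvec_localized[OF ab ev norm pos L16 q this]
  then show "\<exists>\<psi>. jacobi_eigvec d a b ?E \<psi> \<and> (\<Sum>n=a..b. (\<psi> n)^2) = 1 \<and> \<bar>?E - d 0\<bar> \<le> 2 \<and>
      (\<forall>n\<in>{a..b}. n \<noteq> 0 \<longrightarrow> \<bar>\<psi> n\<bar> < q ^ nat \<bar>n\<bar>) \<and> \<bar>\<psi> 0 - 1\<bar> < q"
    using ev norm by blast
  show "\<Lambda> / 8 \<le> \<bar>jacobi_eig d a b j - ?E\<bar>" if "j < nat (b - a + 1)" "j \<noteq> k" for j
    using iso(3)[OF that] L16 loc(1) by linarith
  show "\<Lambda> / 8 \<le> jacobi_eig d a b j - ?E" if "k = 0" "j < nat (b - a + 1)" "j \<noteq> 0" for j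
    using iso(4)[OF that] L16 loc(1) by linarith
qed

section \<open>Analytic potentials on the torus\<close>

lemma torus_periodic_shift_nat:
  assumes "torus_periodic V"
  shows "V (x + real n *\<^sub>R axis i 1) = V x"
proof (induction n arbitrary: x)
  case 0 then show ?case by simp
next
  case (Suc n)
  have "x + real (Suc n) *\<^sub>R axis i 1 = (x + real n *\<^sub>R axis i 1) + axis i 1"
    by (simp add: algebra_simps)
  then have "V (x + real (Suc n) *\<^sub>R axis i 1) = V ((x + real n *\<^sub>R axis i 1) + axis i 1)"
    by (simp add: add.assoc)
  also have "\<dots> = V (x + real n *\<^sub>R axis i 1)" using assms unfolding torus_periodic_def by blast
  finally show ?case using Suc by simp
qed

lemma torus_periodic_shift_int:
  assumes "torus_periodic V"
  shows "V (x + real_of_int k *\<^sub>R axis i 1) = V x"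
proof (cases "k \<ge> 0")
  case True
  define n where "n = nat k"
  then have "k = int n" using True by simp
  then show ?thesis using torus_periodic_shift_nat[OF assms] by simp
next
  case False
  define n where "n = nat (- k)"
  then have n: "k = - int n" using False by simp
  have "V x = V ((x - real n *\<^sub>R axis i 1) + real n *\<^sub>R axis i 1)" by simp
  also have "\<dots> = V (x - real n *\<^sub>R axis i 1)" by (rule torus_periodic_shift_nat[OF assms])
  finally show ?thesis using n by (simp add: algebra_simps)
qed

lemma torus_periodic_shift_sum:
  fixes V :: "real^'d \<Rightarrow> real"
  assumes "torus_periodic V" "finite S"
  shows "V (x + (\<Sum>i\<in>S. real_of_int (m i) *\<^sub>R axis i 1)) = V x"
  using assms(2)
proof (induction S arbitrary: x rule: finite_induct)
  case empty then show ?case by simp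
next
  case (insert j S)
  have "x + (\<Sum>i\<in>insert j S. real_of_int (m i) *\<^sub>R axis i 1)
      = (x + (\<Sum>i\<in>S. real_of_int (m i) *\<^sub>R axis i 1)) + real_of_int (m j) *\<^sub>R axis j 1"
    using insert by (simp add: algebra_simps)
  then have "V (x + (\<Sum>i\<in>insert j S. real_of_int (m i) *\<^sub>R axis i 1))
      = V ((x + (\<Sum>i\<in>S. real_of_int (m i) *\<^sub>R axis i 1)) + real_of_int (m j) *\<^sub>R axis j 1)"
    by (simp add: add.assoc)
  also have "\<dots> = V (x + (\<Sum>i\<in>S. real_of_int (m i) *\<^sub>R axis i 1))"
    by (rule torus_periodic_shift_int[OF assms(1)])
  finally show ?case using insert by simp
qed

lemma vec_lambda_eq_sum_axis:
  "(\<chi> i. real_of_int (m i)) = (\<Sum>i\<in>UNIV. real_of_int (m i) *\<^sub>R axis i (1::real) :: real^'d)"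
proof -
  have "(\<chi> i. real_of_int (m i)) = (\<Sum>i\<in>UNIV. ((\<chi> i. real_of_int (m i)) :: real^'d) $ i *s axis i 1)"
    by (rule basis_expansion[symmetric])
  then show ?thesis by (simp add: scalar_mult_eq_scaleR)
qed

lemma torus_periodic_int_vector:
  fixes V :: "real^'d \<Rightarrow> real"
  assumes "torus_periodic V"
  shows "V (x + (\<chi> i. real_of_int (m i))) = V x"
  using torus_periodic_shift_sum[OF assms, of UNIV x m] vec_lambda_eq_sum_axis[of m] by simp

definition complex_vec :: "real^'d \<Rightarrow> complex^'d" where
  "complex_vec x = (\<chi> i. complex_of_real (x $ i))"

definition complex_line :: "real^'d \<Rightarrow> real^'d \<Rightarrow> complex \<Rightarrow> complex^'d" where
  "complex_line y v t = (\<chi> i. complex_of_real (y $ i) + t * complex_of_real (v $ i))"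

lemma complex_line_of_real: "complex_line y v (complex_of_real s) = complex_vec (y + s *\<^sub>R v)"
  unfolding complex_line_def complex_vec_def by (simp add: vec_eq_iff)

lemma Im_complex_line: "Im (complex_line y v t $ i) = Im t * v $ i"
  unfolding complex_line_def by simp

lemma scaleR_Re_Im_eq_mult: "Re h *\<^sub>R c + Im h *\<^sub>R (\<i> * c) = c * (h::complex)"
  by (simp add: complex_eq_iff algebra_simps)

lemma complex_line_decompose:
  "complex_line y v t =
    complex_vec y + Re t *\<^sub>R complex_vec v + Im t *\<^sub>R (\<chi> i. \<i> * complex_vec v $ i)"
proof -
  have eq: "complex_of_real (y $ i) + t * complex_of_real (v $ i) =
      complex_of_real (y $ i) + Re t *\<^sub>R complex_of_real (v $ i) +
      Im t *\<^sub>R (\<i> * complex_of_real (v $ i))" for i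
    using scaleR_Re_Im_eq_mult[of t "complex_of_real (v $ i)"] by (simp add: add.assoc mult.commute)
  show ?thesis unfolding vec_eq_iff
  proof (rule allI)
    fix i
    have "(complex_vec y + Re t *\<^sub>R complex_vec v + Im t *\<^sub>R (\<chi> i. \<i> * complex_vec v $ i)) $ i
       = complex_of_real (y $ i) + Re t *\<^sub>R complex_of_real (v $ i) +
         Im t *\<^sub>R (\<i> * complex_of_real (v $ i))"
      unfolding complex_vec_def
      by (simp only: vector_add_component vector_scaleR_component vec_lambda_beta)
    also have "\<dots> = complex_line y v t $ i" unfolding complex_line_def using eq[of i]
      by (simp only: vec_lambda_beta)
    finally show "complex_line y v t $ i =
        (complex_vec y + Re t *\<^sub>R complex_vec v + Im t *\<^sub>R (\<chi> i. \<i> * complex_vec v $ i)) $ i"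
      by simp
  qed
qed

lemma complex_line_has_field_derivative:
  fixes Vc :: "complex^'d \<Rightarrow> complex"
  assumes L: "(Vc has_derivative L) (at (complex_line y v t))"
    and Li: "\<forall>w. L (\<chi> i. \<i> * w $ i) = \<i> * L w"
  shows "((\<lambda>t. Vc (complex_line y v t)) has_field_derivative L (complex_vec v)) (at t)"
proof -
  let ?w = "complex_vec v" and ?iw = "(\<chi> i. \<i> * complex_vec v $ i) :: complex^'d"
  have p: "((\<lambda>t. complex_line y v t) has_derivative (\<lambda>h. Re h *\<^sub>R ?w + Im h *\<^sub>R ?iw)) (at t)"
    unfolding complex_line_decompose
    by (auto intro!: derivative_eq_intros bounded_linear.has_derivative[OF bounded_linear_Re]
        bounded_linear.has_derivative[OF bounded_linear_Im])
  have c: "((\<lambda>t. Vc (complex_line y v t)) has_derivative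
      (\<lambda>h. L (Re h *\<^sub>R ?w + Im h *\<^sub>R ?iw))) (at t)"
    using has_derivative_compose[OF p L] by (simp add: o_def)
  have lin: "linear L" using L by (simp add: has_derivative_linear)
  have "L (Re h *\<^sub>R ?w + Im h *\<^sub>R ?iw) = L ?w * h" for h
  proof -
    have "L (Re h *\<^sub>R ?w + Im h *\<^sub>R ?iw) = Re h *\<^sub>R L ?w + Im h *\<^sub>R L ?iw"
      using lin by (simp add: linear_add linear_scale)
    also have "\<dots> = Re h *\<^sub>R L ?w + Im h *\<^sub>R (\<i> * L ?w)" using Li by simp
    also have "\<dots> = L ?w * h" by (rule scaleR_Re_Im_eq_mult)
    finally show ?thesis .
  qed
  then have eq: "(\<lambda>h. L (Re h *\<^sub>R ?w + Im h *\<^sub>R ?iw)) = (*) (L ?w)" by (auto simp: mult.commute)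
  show ?thesis unfolding has_field_derivative_def using c[unfolded eq] .
qed

lemma complex_line_holomorphic_on:
  fixes Vc :: "complex^'d \<Rightarrow> complex"
  assumes holo: "holo_on (strip r) Vc" and S: "open S"
    and inS: "\<And>t. t \<in> S \<Longrightarrow> complex_line y v t \<in> strip r"
  shows "(\<lambda>t. Vc (complex_line y v t)) holomorphic_on S"
proof -
  have "\<forall>t\<in>S. (\<lambda>t. Vc (complex_line y v t)) field_differentiable (at t)"
  proof
    fix t assume "t \<in> S"
    then obtain L where "(Vc has_derivative L) (at (complex_line y v t))"
      "\<forall>w. L (\<chi> i. \<i> * w $ i) = \<i> * L w"
      using holo inS unfolding holo_on_def by blast
    then show "(\<lambda>t. Vc (complex_line y v t)) field_differentiable (at t)"
      using complex_line_has_field_derivative field_differentiable_def by blast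
  qed
  then show ?thesis using S by (simp add: holomorphic_on_open field_differentiable_def)
qed

lemma analytic_ext_complex_vec: "analytic_ext r V Vc \<Longrightarrow> Vc (complex_vec x) = complex_of_real (V x)"
  unfolding analytic_ext_def complex_vec_def by simp

lemma complex_line_in_strip:
  fixes v w :: "real^'d"
  assumes "\<forall>i. \<bar>v $ i\<bar> \<le> \<mu>" "\<bar>Im t\<bar> * \<mu> < r"
  shows "complex_line w v t \<in> strip r"
proof -
  have "\<bar>Im (complex_line w v t $ i)\<bar> < r" for i
    using mult_left_mono[OF assms(1)[rule_format, of i], of "\<bar>Im t\<bar>"] assms(2)
    by (simp add: Im_complex_line abs_mult)
  then show ?thesis unfolding strip_def by simp
qed

lemma strip_uniform_bound:
  fixes z :: "complex^'d"
  assumes "z \<in> strip r"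
  obtains \<mu> where "0 \<le> \<mu>" "\<mu> < r" "\<forall>i. \<bar>Im (z $ i)\<bar> \<le> \<mu>"
proof -
  define \<mu> where "\<mu> = Max (range (\<lambda>i. \<bar>Im (z $ i)\<bar>))"
  have "\<mu> \<in> range (\<lambda>i. \<bar>Im (z $ i)\<bar>)" unfolding \<mu>_def by (intro Max_in) auto
  then have "0 \<le> \<mu>" "\<mu> < r" using assms unfolding strip_def by auto
  moreover have "\<forall>i. \<bar>Im (z $ i)\<bar> \<le> \<mu>" unfolding \<mu>_def by (auto intro: Max_ge)
  ultimately show thesis using that by blast
qed

lemma islimpt_real_axis_in_ball:
  assumes "0 < R"
  shows "(0::complex) islimpt {t \<in> ball 0 R. Im t = 0}"
  unfolding islimpt_approachable
proof (intro allI impI)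
  fix e :: real assume e: "0 < e"
  define s where "s = min (e / 2) (R / 2)"
  have "0 < s" "s < e" "s < R" unfolding s_def using e assms by auto
  then show "\<exists>x' \<in> {t \<in> ball 0 R. Im t = 0}. x' \<noteq> 0 \<and> dist x' 0 < e"
    by (intro bexI[of _ "complex_of_real s"]) auto
qed

text \<open>The difference of \<open>Vc\<close> and its translate along the complex line through \<open>z\<close> in direction
  \<open>Im z\<close> vanishes on the real axis by periodicity of \<open>V\<close>, hence, by analytic continuation, also at
  \<open>\<i>\<close>, where the line passes through \<open>z\<close>.\<close>

lemma analytic_ext_periodic:
  fixes Vc :: "complex^'d \<Rightarrow> complex" and V :: "real^'d \<Rightarrow> real"
  assumes per: "torus_periodic V" and ext: "analytic_ext r V Vc" and z: "z \<in> strip r"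
  shows "Vc (z + complex_vec (\<chi> i. real_of_int (m i))) = Vc z"
proof -
  have holo: "holo_on (strip r) Vc" using ext unfolding analytic_ext_def by simp
  define y :: "real^'d" where "y = (\<chi> i. Re (z $ i))"
  define v :: "real^'d" where "v = (\<chi> i. Im (z $ i))"
  define mv :: "real^'d" where "mv = (\<chi> i. real_of_int (m i))"
  obtain \<mu> where \<mu>: "0 \<le> \<mu>" "\<mu> < r" "\<forall>i. \<bar>v $ i\<bar> \<le> \<mu>"
    using strip_uniform_bound[OF z] unfolding v_def by auto
  define R where "R = 2 * r / (r + \<mu>)"
  have R: "1 < R" "R * \<mu> < r" unfolding R_def using \<mu> by (simp_all add: field_simps)
  define S where "S = ball (0::complex) R"
  have inS: "complex_line w v t \<in> strip r" if "t \<in> S" for w t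
  proof (rule complex_line_in_strip[OF \<mu>(3)])
    have "\<bar>Im t\<bar> \<le> R" using that abs_Im_le_cmod[of t] unfolding S_def by simp
    then have "\<bar>Im t\<bar> * \<mu> \<le> R * \<mu>" using \<mu>(1) by (rule mult_right_mono)
    then show "\<bar>Im t\<bar> * \<mu> < r" using R by linarith
  qed
  define g where "g t = Vc (complex_line (y + mv) v t) - Vc (complex_line y v t)" for t
  have holo_g: "g holomorphic_on S" unfolding g_def
    by (intro holomorphic_on_diff complex_line_holomorphic_on[OF holo] inS) (auto simp: S_def)
  have real_axis: "g t = 0" if "t \<in> {t \<in> S. Im t = 0}" for t
  proof -
    have t: "t = complex_of_real (Re t)" using that by (simp add: complex_eq_iff)
    have "g t = Vc (complex_vec (y + Re t *\<^sub>R v + mv)) - Vc (complex_vec (y + Re t *\<^sub>R v))"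
      unfolding g_def by (subst (1 2) t) (simp only: complex_line_of_real algebra_simps)
    then show ?thesis
      using torus_periodic_int_vector[OF per, of "y + Re t *\<^sub>R v" m]
      unfolding analytic_ext_complex_vec[OF ext] mv_def by simp
  qed
  have "g \<i> = 0"
  proof (rule analytic_continuation[OF holo_g _ _ _ _ _ real_axis])
    show "0 islimpt {t \<in> S. Im t = 0}" unfolding S_def using R
      by (intro islimpt_real_axis_in_ball) simp
    show "connected S" unfolding S_def by (rule convex_connected) simp
  qed (use R in \<open>auto simp: S_def\<close>)
  moreover have "complex_line y v \<i> = z"
    unfolding complex_line_def y_def v_def by (simp add: vec_eq_iff complex_eq_iff)
  moreover have "complex_line (y + mv) v \<i> = z + complex_vec mv"
    unfolding complex_line_def y_def v_def complex_vec_def by (simp add: vec_eq_iff complex_eq_iff)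
  ultimately show ?thesis unfolding g_def mv_def by simp
qed

definition unit_cell :: "real \<Rightarrow> (complex^'d) set" where
  "unit_cell c = {z. \<forall>i. 0 \<le> Re (z $ i) \<and> Re (z $ i) \<le> 1 \<and> \<bar>Im (z $ i)\<bar> \<le> c}"

lemma compact_unit_cell: "compact (unit_cell c :: (complex^'d) set)"
proof -
  define C where "C = {w::complex. 0 \<le> Re w \<and> Re w \<le> 1 \<and> \<bar>Im w\<bar> \<le> c}"
  have "C = {w. 0 \<le> Re w} \<inter> {w. Re w \<le> 1} \<inter> ({w. Im w \<le> c} \<inter> {w. - c \<le> Im w})"
    unfolding C_def by auto
  then have "closed C"
    by (metis closed_Int closed_halfspace_Re_ge closed_halfspace_Re_le closed_halfspace_Im_le
        closed_halfspace_Im_ge)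
  moreover have "(unit_cell c :: (complex^'d) set) = (\<Inter>i. (\<lambda>z. z $ i) -` C)"
    unfolding unit_cell_def C_def by auto
  ultimately have "closed (unit_cell c :: (complex^'d) set)"
    by (auto intro!: closed_INT continuous_closed_vimage simp: bounded_linear_vec_nth
      bounded_linear.isCont)
  moreover have "norm z \<le> CARD('d) * (1 + \<bar>c\<bar>)" if "z \<in> unit_cell c" for z :: "complex^'d"
  proof -
    have "norm (z $ i) \<le> 1 + \<bar>c\<bar>" for i
    proof -
      have "0 \<le> Re (z $ i) \<and> Re (z $ i) \<le> 1 \<and> \<bar>Im (z $ i)\<bar> \<le> c"
        using that unfolding unit_cell_def by blast
      then have "\<bar>Re (z $ i)\<bar> \<le> 1" "\<bar>Im (z $ i)\<bar> \<le> \<bar>c\<bar>" by linarith+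
      then show ?thesis using cmod_le[of "z $ i"] by linarith
    qed
    then have "(\<Sum>i\<in>UNIV. norm (z $ i)) \<le> (\<Sum>i\<in>(UNIV::'d set). 1 + \<bar>c\<bar>)" by (intro sum_mono)
    moreover have "norm z \<le> (\<Sum>i\<in>UNIV. norm (z $ i))"
      unfolding norm_vec_def by (rule L2_set_le_sum) simp
    ultimately show ?thesis by simp
  qed
  ultimately show ?thesis unfolding compact_eq_bounded_closed bounded_iff by blast
qed

lemma strip_translate_to_unit_cell:
  fixes z :: "complex^'d"
  assumes "z \<in> strip c"
  shows "z - complex_vec (\<chi> i. real_of_int \<lfloor>Re (z $ i)\<rfloor>) \<in> unit_cell c"
proof -
  have "0 \<le> Re (z $ i) - of_int \<lfloor>Re (z $ i)\<rfloor> \<and> Re (z $ i) - of_int \<lfloor>Re (z $ i)\<rfloor> \<le> 1 \<and>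
      \<bar>Im (z $ i)\<bar> \<le> c" for i
    using assms unfolding strip_def by (simp add: less_imp_le) linarith
  then show ?thesis unfolding unit_cell_def complex_vec_def by simp
qed

lemma holo_on_continuous_on:
  assumes "holo_on S f" "T \<subseteq> S"
  shows "continuous_on T f"
proof (rule continuous_at_imp_continuous_on, rule ballI)
  fix z assume "z \<in> T"
  then obtain L where "(f has_derivative L) (at z)" using assms unfolding holo_on_def by blast
  then show "isCont f z" by (rule has_derivative_continuous)
qed

lemma analytic_ext_bounded_on_strip:
  fixes Vc :: "complex^'d \<Rightarrow> complex" and V :: "real^'d \<Rightarrow> real"
  assumes per: "torus_periodic V" and ext: "analytic_ext r V Vc" and r: "0 < r"
  shows "bdd_above ((\<lambda>z. cmod (Vc z)) ` strip (3 * r / 4))"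
proof -
  have cell: "unit_cell (3 * r / 4) \<subseteq> (strip r :: (complex^'d) set)"
  proof
    fix z :: "complex^'d" assume "z \<in> unit_cell (3 * r / 4)"
    then have im: "\<bar>Im (z $ i)\<bar> \<le> 3 * r / 4" for i unfolding unit_cell_def by simp
    have "\<bar>Im (z $ i)\<bar> < r" for i using im[of i] r by linarith
    then show "z \<in> strip r" unfolding strip_def by simp
  qed
  then have "continuous_on (unit_cell (3 * r / 4)) Vc"
    using ext holo_on_continuous_on unfolding analytic_ext_def by blast
  then have "bounded (Vc ` unit_cell (3 * r / 4))"
    by (intro compact_imp_bounded compact_continuous_image compact_unit_cell)
  then obtain B where B: "\<And>z. z \<in> unit_cell (3 * r / 4) \<Longrightarrow> cmod (Vc z) \<le> B"
    unfolding bounded_iff by blast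
  have "cmod (Vc z) \<le> B" if "z \<in> strip (3 * r / 4)" for z
  proof -
    define z' where "z' = z - complex_vec (\<chi> i. real_of_int \<lfloor>Re (z $ i)\<rfloor>)"
    have z': "z' \<in> unit_cell (3 * r / 4)" unfolding z'_def
      by (rule strip_translate_to_unit_cell[OF that])
    then have "Vc (z' + complex_vec (\<chi> i. real_of_int \<lfloor>Re (z $ i)\<rfloor>)) = Vc z'"
      using cell by (intro analytic_ext_periodic[OF per ext]) auto
    then show ?thesis using B[OF z'] unfolding z'_def by simp
  qed
  then show ?thesis by (auto simp: bdd_above_def)
qed

lemma norm_le_sup_norm_strip:
  fixes Vc :: "complex^'d \<Rightarrow> complex" and V :: "real^'d \<Rightarrow> real"
  assumes per: "torus_periodic V" and ext: "analytic_ext r V Vc" and r: "0 < r"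
    and z: "z \<in> strip (3 * r / 4)"
  shows "cmod (Vc z) \<le> sup_norm_strip r Vc"
  unfolding sup_norm_strip_def using analytic_ext_bounded_on_strip[OF per ext r] z
    by (intro cSup_upper) auto

lemma open_horizontal_strip: "open {t::complex. \<bar>Im t\<bar> < r}"
proof -
  have "{t::complex. \<bar>Im t\<bar> < r} = {t. Im t < r} \<inter> {t. - r < Im t}" by auto
  then show ?thesis by (metis open_Int open_halfspace_Im_lt open_halfspace_Im_gt)
qed

lemma analytic_ext_line_holomorphic:
  fixes Vc :: "complex^'d \<Rightarrow> complex" and v y :: "real^'d"
  assumes ext: "analytic_ext r V Vc" and v: "\<forall>i. \<bar>v $ i\<bar> \<le> 1"
  shows "(\<lambda>t. Vc (complex_line y v t)) holomorphic_on {t. \<bar>Im t\<bar> < r}"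
proof (rule complex_line_holomorphic_on[OF _ open_horizontal_strip])
  show "holo_on (strip r) Vc" using ext unfolding analytic_ext_def by simp
  show "complex_line y v t \<in> strip r" if "t \<in> {t. \<bar>Im t\<bar> < r}" for t
    using complex_line_in_strip[OF v, of t r y] that by simp
qed

text \<open>Cauchy's estimate on discs of radius \<open>r / 2\<close> around real points, which stay inside the
  strip of width \<open>3 r / 4\<close> where \<open>Vc\<close> is bounded by its sup norm.\<close>

lemma analytic_ext_line_deriv_bound:
  fixes Vc :: "complex^'d \<Rightarrow> complex" and V :: "real^'d \<Rightarrow> real" and v y :: "real^'d"
  assumes per: "torus_periodic V" and ext: "analytic_ext r V Vc" and r: "0 < r"
    and v: "\<forall>i. \<bar>v $ i\<bar> \<le> 1" and \<zeta>: "Im \<zeta> = 0"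
  shows "cmod (deriv (\<lambda>t. Vc (complex_line y v t)) \<zeta>) \<le> 2 * sup_norm_strip r Vc / r"
proof -
  define g where "g t = Vc (complex_line y v t)" for t
  have hg: "g holomorphic_on {t. \<bar>Im t\<bar> < r}"
    unfolding g_def by (rule analytic_ext_line_holomorphic[OF ext v])
  have Im_le: "\<bar>Im x\<bar> \<le> cmod (\<zeta> - x)" for x using abs_Im_le_cmod[of "\<zeta> - x"] \<zeta> by simp
  have cb: "cball \<zeta> (r / 2) \<subseteq> {t. \<bar>Im t\<bar> < r}"
  proof
    fix x assume "x \<in> cball \<zeta> (r / 2)"
    then have "cmod (\<zeta> - x) \<le> r / 2" by (simp add: dist_norm)
    then show "x \<in> {t. \<bar>Im t\<bar> < r}" using Im_le[of x] r by simp
  qed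
  have "cmod ((deriv ^^ 1) g \<zeta>) \<le> fact 1 * sup_norm_strip r Vc / (r / 2) ^ 1"
  proof (rule Cauchy_inequality)
    show "g holomorphic_on ball \<zeta> (r / 2)"
      using hg cb ball_subset_cball by (blast intro: holomorphic_on_subset)
    show "continuous_on (cball \<zeta> (r / 2)) g"
      using holomorphic_on_imp_continuous_on[OF hg] cb by (rule continuous_on_subset)
    show "0 < r / 2" using r by simp
    fix x assume "cmod (\<zeta> - x) = r / 2"
    then have "\<bar>Im x\<bar> * 1 < 3 * r / 4" using Im_le[of x] r by simp
    then have "complex_line y v x \<in> strip (3 * r / 4)" by (rule complex_line_in_strip[OF v])
    then show "cmod (g x) \<le> sup_norm_strip r Vc" unfolding g_def
      by (rule norm_le_sup_norm_strip[OF per ext r])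
  qed
  then show ?thesis unfolding g_def by (simp add: mult.commute)
qed

lemma analytic_ext_lipschitz:
  fixes Vc :: "complex^'d \<Rightarrow> complex" and V :: "real^'d \<Rightarrow> real" and h y :: "real^'d"
  assumes per: "torus_periodic V" and ext: "analytic_ext r V Vc" and r: "0 < r"
    and eta: "0 < \<eta>" and h: "\<forall>i. \<bar>h $ i\<bar> \<le> \<eta>"
  shows "\<bar>V (y + h) - V y\<bar> \<le> 2 * sup_norm_strip r Vc * \<eta> / r"
proof -
  define v where "v = (1 / \<eta>) *\<^sub>R h"
  have v: "\<forall>i. \<bar>v $ i\<bar> \<le> 1" using h eta unfolding v_def by (simp add: field_simps)
  define g where "g t = Vc (complex_line y v t)" for t
  define T where "T = closed_segment 0 (complex_of_real \<eta>)"
  have T_real: "Im \<zeta> = 0" if "\<zeta> \<in> T" for \<zeta> using that unfolding T_def by (auto simp: in_segment)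
  have hg: "g holomorphic_on {t. \<bar>Im t\<bar> < r}"
    unfolding g_def by (rule analytic_ext_line_holomorphic[OF ext v])
  have "cmod (g (complex_of_real \<eta>) - g 0) \<le>
      2 * sup_norm_strip r Vc / r * cmod (complex_of_real \<eta> - 0)"
  proof (rule field_differentiable_bound[of T g "deriv g"])
    show "convex T" unfolding T_def by (rule convex_closed_segment)
    show "(g has_field_derivative deriv g z) (at z within T)" if "z \<in> T" for z
      using holomorphic_derivI[OF hg open_horizontal_strip] T_real[OF that] r by simp
    show "cmod (deriv g z) \<le> 2 * sup_norm_strip r Vc / r" if "z \<in> T" for z
      unfolding g_def by (rule analytic_ext_line_deriv_bound[OF per ext r v T_real[OF that]])
    show "complex_of_real \<eta> \<in> T" "0 \<in> T" unfolding T_def by auto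
  qed
  moreover have "g (complex_of_real \<eta>) = complex_of_real (V (y + h))"
    unfolding g_def complex_line_of_real analytic_ext_complex_vec[OF ext] v_def using eta by simp
  moreover have "g 0 = complex_of_real (V y)"
    using complex_line_of_real[of y v 0] analytic_ext_complex_vec[OF ext, of y]
      unfolding g_def by simp
  ultimately show ?thesis using eta by (simp flip: of_real_diff)
qed

lemma torus_dist_lipschitz:
  fixes Vc :: "complex^'d \<Rightarrow> complex" and V :: "real^'d \<Rightarrow> real" and x x0 w :: "real^'d"
  assumes per: "torus_periodic V" and ext: "analytic_ext r V Vc" and r: "0 < r"
    and dist: "torus_dist x x0 < \<eta>"
  shows "\<bar>V (x + w) - V (x0 + w)\<bar> \<le> 2 * sup_norm_strip r Vc * \<eta> / r"
proof -
  define D where "D = x - x0"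
  define mm where "mm i = round (D $ i)" for i
  define h :: "real^'d" where "h = (\<chi> i. D $ i - real_of_int (mm i))"
  have hb: "\<bar>h $ i\<bar> \<le> torus_dist x x0" for i
  proof -
    have "\<bar>h $ i\<bar> = \<bar>(x $ i - x0 $ i) - real_of_int (round (x $ i - x0 $ i))\<bar>"
      unfolding h_def mm_def D_def by simp
    also have "\<dots> \<le> torus_dist x x0" unfolding torus_dist_def by (rule Max_ge) auto
    finally show ?thesis .
  qed
  have "0 \<le> torus_dist x x0" using hb abs_ge_zero order_trans by blast
  then have eta: "0 < \<eta>" using dist by linarith
  have hb': "\<forall>i. \<bar>h $ i\<bar> \<le> \<eta>"
  proof
    fix i show "\<bar>h $ i\<bar> \<le> \<eta>" using hb[of i] dist by linarith
  qed
  have e: "x + w = (x0 + w + h) + (\<chi> i. real_of_int (mm i))"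
    unfolding h_def D_def by (simp add: vec_eq_iff)
  have "V (x + w) = V ((x0 + w + h) + (\<chi> i. real_of_int (mm i)))" unfolding e by (rule refl)
  also have "\<dots> = V (x0 + w + h)" by (rule torus_periodic_int_vector[OF per])
  finally have "V (x + w) = V (x0 + w + h)" .
  then show ?thesis using analytic_ext_lipschitz[OF per ext r eta hb', of "x0 + w"] by simp
qed

lemma sup_norm_strip_T_V_bounds:
  fixes Vc :: "complex^'d \<Rightarrow> complex" and V :: "real^'d \<Rightarrow> real"
  assumes per: "torus_periodic V" and ext: "analytic_ext r V Vc" and r: "0 < r"
  shows "0 \<le> sup_norm_strip r Vc" "sup_norm_strip r Vc \<le> exp (T_V r V Vc)" "2 \<le> T_V r V Vc"
proof -
  have "0 \<in> strip (3 * r / 4)" unfolding strip_def using r by simp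
  then have "cmod (Vc 0) \<le> sup_norm_strip r Vc" by (rule norm_le_sup_norm_strip[OF per ext r])
  then show M0: "0 \<le> sup_norm_strip r Vc" by (meson norm_ge_zero order_trans)
  show "2 \<le> T_V r V Vc" unfolding T_V_def by simp
  show "sup_norm_strip r Vc \<le> exp (T_V r V Vc)"
  proof (cases "sup_norm_strip r Vc = 0")
    case True then show ?thesis by simp
  next
    case False
    then have pos: "0 < sup_norm_strip r Vc" using M0 by simp
    have "ln (sup_norm_strip r Vc) \<le> T_V r V Vc" unfolding T_V_def by simp
    then show ?thesis using pos by (metis exp_le_cancel_iff exp_ln)
  qed
qed

section \<open>Localized eigenvectors at large coupling\<close>

lemma powr_le_half_minus_4:
  fixes \<epsilon> L :: real
  assumes e: "0 < \<epsilon>" "\<epsilon> < 1" and L: "max 16 (4 powr (1 / (1 - \<epsilon>))) \<le> L"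
  shows "L powr \<epsilon> \<le> L / 2 - 4"
proof -
  have L16: "16 \<le> L" and L4: "4 powr (1 / (1 - \<epsilon>)) \<le> L" using L by auto
  have "4 = (4 powr (1 / (1 - \<epsilon>))) powr (1 - \<epsilon>)" using e by (simp add: powr_powr)
  also have "\<dots> \<le> L powr (1 - \<epsilon>)" using L4 e by (intro powr_mono2) auto
  finally have "L powr \<epsilon> * 4 \<le> L powr \<epsilon> * L powr (1 - \<epsilon>)" by (intro mult_left_mono) auto
  also have "\<dots> = L" using L16 by (simp flip: powr_add)
  finally show ?thesis using L16 by linarith
qed

lemma add_le_powr_log:
  fixes T K :: real
  assumes T: "2 \<le> T" and K: "0 \<le> K"
  shows "T + K \<le> T powr (1 + log 2 (1 + K))"
proof -
  have "K \<le> T * K" using T K by (simp add: mult_le_cancel_right1)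
  then have "T + K \<le> T * (1 + K)" by (simp add: algebra_simps)
  also have "\<dots> = T * 2 powr (log 2 (1 + K))" using K by simp
  also have "\<dots> \<le> T * T powr (log 2 (1 + K))" using T K by (intro mult_left_mono powr_mono2) auto
  also have "\<dots> = T powr (1 + log 2 (1 + K))" using T by (simp add: powr_add)
  finally show ?thesis .
qed

lemma exponent_for_log_scales:
  fixes \<rho> \<epsilon> :: real
  assumes r: "0 < \<rho>" "\<rho> \<le> 1" and e: "0 < \<epsilon>" "\<epsilon> < 1"
  shows "\<exists>C\<ge>0. \<forall>T L. 2 \<le> T \<longrightarrow> T powr C \<le> L \<longrightarrow>
           0 < L \<and> L powr \<epsilon> \<le> L / 2 - 4 \<and> T + ln (16 / \<rho>) \<le> 2 * L powr \<epsilon>"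
proof -
  define K where "K = ln (16 / \<rho>)"
  define s where "s = 1 + log 2 (1 + K)"
  define L0 where "L0 = max 16 (4 powr (1 / (1 - \<epsilon>)))"
  define C where "C = max (s / \<epsilon>) (log 2 L0)"
  have K: "0 < K" unfolding K_def using r by (simp add: field_simps)
  then have C0: "0 \<le> C" unfolding C_def s_def using e by (simp add: le_max_iff_disj)
  have Ce: "s \<le> C * \<epsilon>" unfolding C_def using e by (simp add: field_simps max_def)
  show ?thesis
  proof (intro exI[of _ C] conjI C0 allI impI)
    fix T L :: real assume T: "2 \<le> T" and TL: "T powr C \<le> L"
    have "L0 = 2 powr (log 2 L0)" unfolding L0_def by simp
    also have "\<dots> \<le> 2 powr C" unfolding C_def by (intro powr_mono) auto
    also have "\<dots> \<le> T powr C" using T C0 by (intro powr_mono2) auto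
    finally have L0: "L0 \<le> L" using TL by linarith
    then show "0 < L" unfolding L0_def by simp
    show "L powr \<epsilon> \<le> L / 2 - 4" using powr_le_half_minus_4[OF e] L0 unfolding L0_def by blast
    have "T + K \<le> T powr s" unfolding s_def using add_le_powr_log[OF T] K by simp
    also have "\<dots> \<le> T powr (C * \<epsilon>)" using Ce T by (intro powr_mono) auto
    also have "\<dots> = (T powr C) powr \<epsilon>" using T by (simp add: powr_powr)
    also have "\<dots> \<le> L powr \<epsilon>" using TL e by (intro powr_mono2) auto
    finally show "T + ln (16 / \<rho>) \<le> 2 * L powr \<epsilon>" using powr_ge_zero[of L \<epsilon>] unfolding K_def by linarith
  qed
qed

lemma exp_4_ge_16: "16 \<le> exp (4::real)"
proof -
  have "(2::real) ^ 4 \<le> exp 1 ^ 4" using exp_ge_add_one_self[of 1] by (intro power_mono) auto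
  then show ?thesis by (simp flip: exp_of_nat_mult)
qed

lemma coupling_threshold:
  fixes \<rho> \<epsilon> :: real
  assumes "0 < \<rho>" "\<rho> \<le> 1" "0 < \<epsilon>" "\<epsilon> < 1"
  obtains C where "\<And>T M lam. 2 \<le> T \<Longrightarrow> 0 \<le> M \<Longrightarrow> M \<le> exp T \<Longrightarrow> exp (T powr C) \<le> lam \<Longrightarrow>
      16 \<le> lam * exp (- ((ln lam) powr \<epsilon>)) \<and>
      8 < lam * exp (- ((ln lam) powr \<epsilon>)) * exp (- (ln lam) / 2) \<and>
      2 * M * exp (- 3 * (ln lam) powr \<epsilon>) / \<rho> \<le> exp (- ((ln lam) powr \<epsilon>)) / 8"
proof -
  obtain C where C: "\<forall>T L. 2 \<le> T \<longrightarrow> T powr C \<le> L \<longrightarrow>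
      0 < L \<and> L powr \<epsilon> \<le> L / 2 - 4 \<and> T + ln (16 / \<rho>) \<le> 2 * L powr \<epsilon>"
    using exponent_for_log_scales[OF assms] by blast
  have "16 \<le> lam * exp (- ((ln lam) powr \<epsilon>)) \<and>
      8 < lam * exp (- ((ln lam) powr \<epsilon>)) * exp (- (ln lam) / 2) \<and>
      2 * M * exp (- 3 * (ln lam) powr \<epsilon>) / \<rho> \<le> exp (- ((ln lam) powr \<epsilon>)) / 8"
    if T: "2 \<le> T" and M: "0 \<le> M" "M \<le> exp T" and lam: "exp (T powr C) \<le> lam" for T M lam
  proof -
    define L where "L = ln lam"
    define G where "G = L powr \<epsilon>"
    have lam_pos: "0 < lam" using lam by (smt (verit) exp_gt_zero)
    then have lam_eq: "lam = exp L" unfolding L_def by simp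
    have "T powr C \<le> L" unfolding L_def using lam lam_pos by (metis exp_le_cancel_iff exp_ln)
    then have G: "0 < L" "G \<le> L / 2 - 4" "T + ln (16 / \<rho>) \<le> 2 * G"
      using C T unfolding G_def by auto
    then have "exp 4 \<le> exp (L - G)" "exp 4 \<le> exp (L / 2 - G)" by simp_all
    then have "16 \<le> exp (L - G)" "8 < exp (L / 2 - G)" using exp_4_ge_16 by linarith+
    moreover have "lam * exp (- G) = exp (L - G)"
      "lam * exp (- G) * exp (- L / 2) = exp (L / 2 - G)"
      unfolding lam_eq by (simp_all flip: exp_add)
    moreover have "2 * M * exp (- 3 * G) / \<rho> \<le> exp (- G) / 8"
    proof -
      have "exp (T - 2 * G) \<le> exp (- ln (16 / \<rho>))" using G by simp
      then have T_small: "exp (T - 2 * G) \<le> \<rho> / 16" using assms by (simp add: exp_minus)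
      have "M * exp (- 3 * G) \<le> exp T * exp (- 3 * G)" using M by (intro mult_right_mono) auto
      also have "\<dots> = exp (T - 2 * G) * exp (- G)" by (simp flip: exp_add)
      also have "\<dots> \<le> \<rho> / 16 * exp (- G)" using T_small by (intro mult_right_mono) auto
      finally have "2 * M * exp (- 3 * G) / \<rho> \<le> 2 * (\<rho> / 16 * exp (- G)) / \<rho>"
        using assms by (intro divide_right_mono) auto
      also have "\<dots> = exp (- G) / 8" using assms by simp
      finally show ?thesis .
    qed
    ultimately show ?thesis unfolding G_def L_def by simp
  qed
  then show thesis by (rule that)
qed

lemma dir_eigvec_eq_jacobi_eigvec:
  "dir_eigvec lam V \<omega> x a b = jacobi_eigvec (\<lambda>n. lam * V (x + of_int n *\<^sub>R \<omega>)) a b"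
  by (simp add: fun_eq_iff dir_eigvec_def jacobi_eigvec_def)

lemma dir_E_eq_jacobi_eig:
  "dir_E lam V \<omega> x a b = jacobi_eig (\<lambda>n. lam * V (x + of_int n *\<^sub>R \<omega>)) a b"
  by (simp add: fun_eq_iff dir_E_def dir_eigs_def jacobi_eig_def jacobi_spectrum_def
      dir_eigvec_eq_jacobi_eigvec)

lemma isolated_site_perturbed:
  fixes V :: "real^'d \<Rightarrow> real" and x x0 \<omega> :: "real^'d"
  assumes lam: "0 < lam" and g: "0 < g"
    and close: "\<And>w. \<bar>V (x + w) - V (x0 + w)\<bar> \<le> g / 8"
    and hyp: "\<forall>n\<in>{a..b} - {0}. g \<le> \<bar>V (x0 + of_int n *\<^sub>R \<omega>) - V x0\<bar>"
  shows "\<forall>n\<in>{a..b}. n \<noteq> 0 \<longrightarrow> 3 * (lam * g) / 4 \<le> \<bar>lam * V (x + of_int n *\<^sub>R \<omega>) - lam * V x\<bar>"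
    and "card {n \<in> {a..b}. lam * V (x + of_int n *\<^sub>R \<omega>) < lam * V x} =
      card {n \<in> {a..b} - {0}. V (x0 + of_int n *\<^sub>R \<omega>) < V x0}"
proof -
  have "\<bar>V x - V x0\<bar> \<le> g / 8" using close[of 0] by simp
  then have diff: "\<bar>(V (x + w) - V x) - (V (x0 + w) - V x0)\<bar> \<le> g / 4" for w
    using close[of w] by linarith
  have "3 * g / 4 \<le> \<bar>V (x + of_int n *\<^sub>R \<omega>) - V x\<bar>" if "n \<in> {a..b} - {0}" for n
  proof -
    have "g \<le> \<bar>V (x0 + of_int n *\<^sub>R \<omega>) - V x0\<bar>" using hyp that by blast
    then show ?thesis using diff[of "of_int n *\<^sub>R \<omega>"] by linarith
  qed
  then show "\<forall>n\<in>{a..b}. n \<noteq> 0 \<longrightarrow> 3 * (lam * g) / 4 \<le> \<bar>lam * V (x + of_int n *\<^sub>R \<omega>) - lam * V x\<bar>"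
    using lam by (auto simp flip: right_diff_distrib simp: abs_mult)
  have "lam * V (x + of_int n *\<^sub>R \<omega>) < lam * V x \<longleftrightarrow> n \<noteq> 0 \<and> V (x0 + of_int n *\<^sub>R \<omega>) < V x0"
    if "n \<in> {a..b}" for n
  proof (cases "n = 0")
    case False
    then have "g \<le> \<bar>V (x0 + of_int n *\<^sub>R \<omega>) - V x0\<bar>" using hyp that by blast
    then show ?thesis using diff[of "of_int n *\<^sub>R \<omega>"] lam g False
      by (auto simp: abs_real_def split: if_splits)
  qed simp
  then show "card {n \<in> {a..b}. lam * V (x + of_int n *\<^sub>R \<omega>) < lam * V x} =
      card {n \<in> {a..b} - {0}. V (x0 + of_int n *\<^sub>R \<omega>) < V x0}"
    by (intro arg_cong[where f = card]) auto
qed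

lemma dir_isolated_eigvec:
  fixes V :: "real^'d \<Rightarrow> real" and x x0 \<omega> :: "real^'d"
  assumes ab: "a < 0" "0 < b" and lam: "0 < lam" and g: "0 < g"
    and close: "\<And>w. \<bar>V (x + w) - V (x0 + w)\<bar> \<le> g / 8"
    and hyp: "\<forall>n\<in>{a..b} - {0}. g \<le> \<bar>V (x0 + of_int n *\<^sub>R \<omega>) - V x0\<bar>"
    and scales: "16 \<le> lam * g" "0 < q" "q < 1" "8 < lam * g * q"
  defines "k \<equiv> card {n \<in> {a..b} - {0}. V (x0 + of_int n *\<^sub>R \<omega>) < V x0}"
  shows "\<exists>\<psi>. dir_eigvec lam V \<omega> x a b (dir_E lam V \<omega> x a b k) \<psi> \<and> (\<Sum>n=a..b. (\<psi> n)^2) = 1 \<and>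
      \<bar>dir_E lam V \<omega> x a b k - lam * V x\<bar> \<le> 2 \<and> (\<forall>n\<in>{a..b}. n \<noteq> 0 \<longrightarrow> \<bar>\<psi> n\<bar> < q ^ nat \<bar>n\<bar>) \<and>
      \<bar>\<psi> 0 - 1\<bar> < q"
    and "\<And>j. j < nat (b - a + 1) \<Longrightarrow> j \<noteq> k \<Longrightarrow>
      lam * g / 8 \<le> \<bar>dir_E lam V \<omega> x a b j - dir_E lam V \<omega> x a b k\<bar>"
    and "\<And>j. k = 0 \<Longrightarrow> j < nat (b - a + 1) \<Longrightarrow> j \<noteq> 0 \<Longrightarrow>
      lam * g / 8 \<le> dir_E lam V \<omega> x a b j - dir_E lam V \<omega> x a b k"
proof -
  define d where "d = (\<lambda>n. lam * V (x + of_int n *\<^sub>R \<omega>))"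
  note site = isolated_site_perturbed[OF lam g close hyp]
  have "\<forall>n\<in>{a..b}. n \<noteq> 0 \<longrightarrow> 3 * (lam * g) / 4 \<le> \<bar>d n - d 0\<bar>"
    using site(1) unfolding d_def by simp
  note iso = jacobi_isolated_eigvec[OF ab scales this]
  have k_eq: "card {n \<in> {a..b}. d n < d 0} = k" using site(2) unfolding d_def k_def by simp
  have E_eq: "jacobi_eig d a b = dir_E lam V \<omega> x a b" unfolding d_def dir_E_eq_jacobi_eig ..
  have ev_eq: "jacobi_eigvec d a b = dir_eigvec lam V \<omega> x a b"
    unfolding d_def dir_eigvec_eq_jacobi_eigvec ..
  have d0: "d 0 = lam * V x" unfolding d_def by simp
  note iso = iso[unfolded k_eq, unfolded E_eq ev_eq d0]
  show "\<exists>\<psi>. dir_eigvec lam V \<omega> x a b (dir_E lam V \<omega> x a b k) \<psi> \<and> (\<Sum>n=a..b. (\<psi> n)^2) = 1 \<and>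
      \<bar>dir_E lam V \<omega> x a b k - lam * V x\<bar> \<le> 2 \<and> (\<forall>n\<in>{a..b}. n \<noteq> 0 \<longrightarrow> \<bar>\<psi> n\<bar> < q ^ nat \<bar>n\<bar>) \<and>
      \<bar>\<psi> 0 - 1\<bar> < q"
    by (rule iso(2))
  show "lam * g / 8 \<le> \<bar>dir_E lam V \<omega> x a b j - dir_E lam V \<omega> x a b k\<bar>"
    if "j < nat (b - a + 1)" "j \<noteq> k" for j using iso(3) that .
  show "lam * g / 8 \<le> dir_E lam V \<omega> x a b j - dir_E lam V \<omega> x a b k"
    if "k = 0" "j < nat (b - a + 1)" "j \<noteq> 0" for j using iso(4) that .
qed

lemma exp_scaled_power: "exp (- L / 2) ^ nat \<bar>n\<bar> = exp (- L * \<bar>of_int n\<bar> / 2 :: real)"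
  by (simp flip: exp_of_nat_mult)

lemma localized_eigvecs_near_base_point:
  fixes V :: "real^'d \<Rightarrow> real" and Vc :: "complex^'d \<Rightarrow> complex" and \<omega> x0 :: "real^'d"
  assumes per: "torus_periodic V" and ext: "analytic_ext \<rho> V Vc" and \<rho>: "0 < \<rho>"
    and ab: "a < 0" "0 < b"
    and scales: "16 \<le> lam * exp (- ((ln lam) powr \<epsilon>))"
      "8 < lam * exp (- ((ln lam) powr \<epsilon>)) * exp (- (ln lam) / 2)"
      "2 * sup_norm_strip \<rho> Vc * exp (- 3 * (ln lam) powr \<epsilon>) / \<rho> \<le> exp (- ((ln lam) powr \<epsilon>)) / 8"
    and hyp: "\<forall>n\<in>{a..b} - {0}. \<bar>V (x0 + of_int n *\<^sub>R \<omega>) - V x0\<bar> \<ge> exp (- ((ln lam) powr \<epsilon>))"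
  shows "\<exists>k < nat (b - a + 1). \<exists>\<psi> :: real^'d \<Rightarrow> int \<Rightarrow> real.
        \<forall>x. torus_dist x x0 < exp (- 3 * (ln lam) powr \<epsilon>) \<longrightarrow>
          dir_eigvec lam V \<omega> x a b (dir_E lam V \<omega> x a b k) (\<psi> x) \<and>
          (\<Sum>n=a..b. (\<psi> x n)^2) = 1 \<and>
          \<bar>dir_E lam V \<omega> x a b k / lam - V x\<bar> \<le> 2 / lam \<and>
          (\<forall>n\<in>{a..b}. n \<noteq> 0 \<longrightarrow> \<bar>\<psi> x n\<bar> < exp (- (ln lam) * \<bar>of_int n\<bar> / 2)) \<and>
          \<bar>\<psi> x 0 - 1\<bar> < exp (- (ln lam) / 2) \<and>
          (\<forall>j < nat (b - a + 1). j \<noteq> k \<longrightarrow>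
             \<bar>dir_E lam V \<omega> x a b j - dir_E lam V \<omega> x a b k\<bar> / lam \<ge> exp (- ((ln lam) powr \<epsilon>)) / 8) \<and>
          ((\<forall>n\<in>{a..b} - {0}. V (x0 + of_int n *\<^sub>R \<omega>) - V x0 \<ge> exp (- ((ln lam) powr \<epsilon>))) \<longrightarrow>
             (\<forall>j < nat (b - a + 1). j \<noteq> k \<longrightarrow>
               (dir_E lam V \<omega> x a b j - dir_E lam V \<omega> x a b k) / lam \<ge> exp (- ((ln lam) powr \<epsilon>)) / 8))"
proof -
  define k where "k = card {n \<in> {a..b} - {0}. V (x0 + of_int n *\<^sub>R \<omega>) < V x0}"
  have "k \<le> card ({a..b} - {0})" unfolding k_def by (intro card_mono) auto
  then have kN: "k < nat (b - a + 1)" using ab by (simp add: card_Diff_singleton)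
  show ?thesis
  proof (rule exI[of _ k], rule conjI[OF kN], rule choice, rule allI, goal_cases)
    case (1 x)
    show ?case
    proof (cases "torus_dist x x0 < exp (- 3 * (ln lam) powr \<epsilon>)")
      case True
      define g where "g = exp (- ((ln lam) powr \<epsilon>))"
      define q where "q = exp (- (ln lam) / 2)"
      have g: "0 < g" "g \<le> 1" unfolding g_def by simp_all
      have "0 < lam * g" using scales(1) unfolding g_def by linarith
      then have "0 < lam" using g by (simp add: zero_less_mult_iff)
      then have "lam * g \<le> lam" using g by (simp add: mult_left_le)
      then have "16 \<le> lam" using scales(1) unfolding g_def by linarith
      then have lam: "0 < lam" "0 < ln lam" by simp_all
      have q: "0 < q" "q < 1" using lam unfolding q_def by auto
      have close: "\<bar>V (x + w) - V (x0 + w)\<bar> \<le> g / 8" for w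
        using torus_dist_lipschitz[OF per ext \<rho> True, of w] scales(3) unfolding g_def by linarith
      have "\<forall>n\<in>{a..b} - {0}. g \<le> \<bar>V (x0 + of_int n *\<^sub>R \<omega>) - V x0\<bar>"
        using hyp unfolding g_def by simp
      note iso = dir_isolated_eigvec[OF ab lam(1) g(1) close this
          scales(1)[folded g_def] q scales(2)[folded g_def q_def], folded k_def]
      obtain \<psi> where ev: "dir_eigvec lam V \<omega> x a b (dir_E lam V \<omega> x a b k) \<psi>"
        and norm: "(\<Sum>n=a..b. (\<psi> n)^2) = 1"
        and near: "\<bar>dir_E lam V \<omega> x a b k - lam * V x\<bar> \<le> 2"
        and decay: "\<forall>n\<in>{a..b}. n \<noteq> 0 \<longrightarrow> \<bar>\<psi> n\<bar> < q ^ nat \<bar>n\<bar>" and centre: "\<bar>\<psi> 0 - 1\<bar> < q"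
        using iso(1) by blast
      have "dir_E lam V \<omega> x a b k / lam - V x = (dir_E lam V \<omega> x a b k - lam * V x) / lam"
        using lam by (simp add: field_simps)
      then have "\<bar>dir_E lam V \<omega> x a b k / lam - V x\<bar> \<le> 2 / lam"
        using near lam by (simp add: divide_right_mono)
      moreover have "\<forall>n\<in>{a..b}. n \<noteq> 0 \<longrightarrow> \<bar>\<psi> n\<bar> < exp (- (ln lam) * \<bar>of_int n\<bar> / 2)"
        using decay unfolding q_def exp_scaled_power .
      moreover have "\<forall>j < nat (b - a + 1). j \<noteq> k \<longrightarrow>
          \<bar>dir_E lam V \<omega> x a b j - dir_E lam V \<omega> x a b k\<bar> / lam \<ge> g / 8"
        using iso(2) lam by (simp add: field_simps)
      moreover have "k = 0" if pos: "\<forall>n\<in>{a..b} - {0}. V (x0 + of_int n *\<^sub>R \<omega>) - V x0 \<ge> g"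
      proof -
        have "\<not> V (x0 + of_int n *\<^sub>R \<omega>) < V x0" if "n \<in> {a..b} - {0}" for n
          using pos[rule_format, OF that] g by linarith
        then have empty: "{n \<in> {a..b} - {0}. V (x0 + of_int n *\<^sub>R \<omega>) < V x0} = {}" by blast
        show ?thesis unfolding k_def empty by simp
      qed
      then have "(\<forall>n\<in>{a..b} - {0}. V (x0 + of_int n *\<^sub>R \<omega>) - V x0 \<ge> g) \<longrightarrow>
          (\<forall>j < nat (b - a + 1). j \<noteq> k \<longrightarrow>
            (dir_E lam V \<omega> x a b j - dir_E lam V \<omega> x a b k) / lam \<ge> g / 8)"
        using iso(3) lam by (simp add: field_simps)
      ultimately show ?thesis
        unfolding g_def[symmetric] q_def[symmetric] using ev norm centre by blast
    qed blast
  qed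
qed

theorem lemma3p8:
  fixes \<rho> \<epsilon> :: real
  assumes "0 < \<rho>" "\<rho> \<le> 1" "0 < \<epsilon>" "\<epsilon> < 1"
  shows "\<exists>C::real. \<forall>(V :: real^'d \<Rightarrow> real) Vc (\<omega> :: real^'d) (x0 :: real^'d) (a::int) (b::int) (lam::real).
     CARD('d) \<ge> 2 \<and> torus_periodic V \<and> (\<exists>x y. V x \<noteq> V y) \<and> analytic_ext \<rho> V Vc \<and>
     a < 0 \<and> 0 < b \<and>
     lam \<ge> exp ((T_V \<rho> V Vc) powr C) \<and>
     (\<forall>n\<in>{a..b} - {0}. \<bar>V (x0 + of_int n *\<^sub>R \<omega>) - V x0\<bar> \<ge> exp (- ((ln lam) powr \<epsilon>)))
     \<longrightarrow>
     (\<exists>k < nat (b - a + 1). \<exists>\<psi> :: real^'d \<Rightarrow> int \<Rightarrow> real.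
        \<forall>x. torus_dist x x0 < exp (- 3 * (ln lam) powr \<epsilon>) \<longrightarrow>
          dir_eigvec lam V \<omega> x a b (dir_E lam V \<omega> x a b k) (\<psi> x) \<and>
          (\<Sum>n=a..b. (\<psi> x n)^2) = 1 \<and>
          \<bar>dir_E lam V \<omega> x a b k / lam - V x\<bar> \<le> 2 / lam \<and>
          (\<forall>n\<in>{a..b}. n \<noteq> 0 \<longrightarrow> \<bar>\<psi> x n\<bar> < exp (- (ln lam) * \<bar>of_int n\<bar> / 2)) \<and>
          \<bar>\<psi> x 0 - 1\<bar> < exp (- (ln lam) / 2) \<and>
          (\<forall>j < nat (b - a + 1). j \<noteq> k \<longrightarrow>
             \<bar>dir_E lam V \<omega> x a b j - dir_E lam V \<omega> x a b k\<bar> / lam \<ge> exp (- ((ln lam) powr \<epsilon>)) / 8) \<and>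
          ((\<forall>n\<in>{a..b} - {0}. V (x0 + of_int n *\<^sub>R \<omega>) - V x0 \<ge> exp (- ((ln lam) powr \<epsilon>))) \<longrightarrow>
             (\<forall>j < nat (b - a + 1). j \<noteq> k \<longrightarrow>
               (dir_E lam V \<omega> x a b j - dir_E lam V \<omega> x a b k) / lam \<ge> exp (- ((ln lam) powr \<epsilon>)) / 8)))"
proof (rule coupling_threshold[OF assms], goal_cases)
  case (1 C)
  note C = this
  show ?case
  proof (rule exI[of _ C], intro allI impI, goal_cases)
    case (1 V Vc \<omega> x0 a b lam)
    then have per: "torus_periodic V" and ext: "analytic_ext \<rho> V Vc" and ab: "a < 0" "0 < b"
      and lam: "exp ((T_V \<rho> V Vc) powr C) \<le> lam"
      and hyp: "\<forall>n\<in>{a..b} - {0}. \<bar>V (x0 + of_int n *\<^sub>R \<omega>) - V x0\<bar> \<ge> exp (- ((ln lam) powr \<epsilon>))"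
      by auto
    note bounds = sup_norm_strip_T_V_bounds[OF per ext \<open>0 < \<rho>\<close>]
    note scales = C[OF bounds(3,1,2) lam]
    have "16 \<le> lam * exp (- ((ln lam) powr \<epsilon>))"
      "8 < lam * exp (- ((ln lam) powr \<epsilon>)) * exp (- (ln lam) / 2)"
      "2 * sup_norm_strip \<rho> Vc * exp (- 3 * (ln lam) powr \<epsilon>) / \<rho> \<le> exp (- ((ln lam) powr \<epsilon>)) / 8"
      using scales by blast+
    then show ?case by (rule localized_eigvecs_near_base_point[OF per ext \<open>0 < \<rho>\<close> ab _ _ _ hyp])
  qed
qed

end
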